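(* Let $m,n\ge0$, $A\subseteq\{1,\dots,m+n\}$ with $|A|=n$, and $w\in S_{m+n}$. Then $\mathrm{Dela}_A(\chi^w)=\chi^{w_{\le m}}\otimes\chi^{w_{>m}}$ if $w^{-1}(A)=\{m+1,\dots,m+n\}$, and $\mathrm{Dela}_A(\chi^w)=0$ otherwise.
   Context: Let $q$ be a prime power, $\mathfrak{ut}_N$ the additive group of strictly upper triangular $N\times N$ matrices over $\mathbb{F}_q$, $e_{ij}(t)$ the matrix with $t$ at $(i,j)$ and zeros elsewhere. For $w\in S_N$ (one-line notation), $\iota_k(w)=\#\{i<w^{-1}(k):w(i)>k\}$ and $\mathfrak{ut}_w=\{x\in\mathfrak{ut}_N:x_{ij}\ne0\Rightarrow0<j-i\le\iota_i(w)\}$. These subgroups form a lattice (closed under intersection and sum); its normal lattice supercharacter theory has supercharacters $\chi^w=\sum_\psi\psi(1)\psi$, summed over irreducible characters $\psi$ of $\mathfrak{ut}_N$ such that $\mathfrak{ut}_w$ is the largest lattice member contained in $\ker\psi$; $\mathrm{scf}(\mathfrak{ut}_N)$ is their span. With $N=m+n$, $|A|=n$: for $1\le i<j\le N$ let $c_i=N-\#\{a\in A:a>i\}$, $U_A=\{(i,j):i\in A,j>c_i\}$, $L_A=\{(i,j):i\in A,j\le c_i\}$, $U_A^\vee=\{(i,j):i\notin A,j\le c_i\}$, $R_A=\{(i,j):i\notin A,j>c_i\}$, and $\mathfrak{ut}_A,\mathfrak{l}_A,\mathfrak{ut}_A^\vee,\mathfrak{r}_A$ the subgroups of matrices supported there.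 Identify $\mathfrak{ut}_A^\vee\cong\mathfrak{ut}_m$ via $e_{ij}(t)\mapsto e_{i-k,j-k}(t)$, $k=\#\{a\in A:a<i\}$, and $\mathfrak{ut}_A\cong\mathfrak{ut}_n$ via $e_{ij}(t)\mapsto e_{i-\#\{b<i:b\notin A\},j-m}(t)$, so functions on $\mathfrak{ut}_A^\vee\times\mathfrak{ut}_A$ are elements of functions on $\mathfrak{ut}_m\times\mathfrak{ut}_n$. Delapsing: for $\gamma\in\mathrm{scf}(\mathfrak{ut}_N)$, $\mathrm{Dela}_A(\gamma)(u',u)=q^{-|L_A|-|R_A|}\sum_{l\in\mathfrak{l}_A,r\in\mathfrak{r}_A}\left(\frac{-1}{q-1}\right)^{\#\{(i,j):r_{ij}\ne0\}}\gamma(l+u'+u+r)$. For $w\in S_{m+n}$: $w_{\le m}(i)=w(i)-\#\{j>m:w(j)<w(i)\}$ ($1\le i\le m$) and $w_{>m}(j)=w(j+m)-\#\{i\le m:w(i)<w(j+m)\}$ ($1\le j\le n$), i.e. the standardizations of the first $m$ and last $n$ letters. *)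

theory Defs
  imports Complex_Main "HOL-Combinatorics.Permutations"
begin

text \<open>Matrices over the finite field 'a are functions nat => nat => 'a, 1-indexed.\<close>
type_synonym 'a mat = "nat \<Rightarrow> nat \<Rightarrow> 'a"

definition madd :: "'a::plus mat \<Rightarrow> 'a mat \<Rightarrow> 'a mat" where
  "madd x y = (\<lambda>i j. x i j + y i j)"

definition ut :: "nat \<Rightarrow> ('a::zero) mat set" where
  "ut N = {x. \<forall>i j. x i j \<noteq> 0 \<longrightarrow> 1 \<le> i \<and> i < j \<and> j \<le> N}"

definition supported :: "nat \<Rightarrow> (nat \<times> nat) set \<Rightarrow> ('a::zero) mat set" where
  "supported N P = {x \<in> ut N. \<forall>i j. x i j \<noteq> 0 \<longrightarrow> (i, j) \<in> P}"

text \<open>Irreducible characters of the (finite abelian) additive group ut N: group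
  homomorphisms into the multiplicative group of nonzero complex numbers,
  extended by 0 outside ut N.\<close>
definition irr_chars :: "nat \<Rightarrow> (('a::{finite,field}) mat \<Rightarrow> complex) set" where
  "irr_chars N = {\<psi>. (\<forall>x\<in>ut N. \<forall>y\<in>ut N. \<psi> (madd x y) = \<psi> x * \<psi> y)
                    \<and> (\<forall>x\<in>ut N. \<psi> x \<noteq> 0) \<and> (\<forall>x. x \<notin> ut N \<longrightarrow> \<psi> x = 0)}"

definition ker_char :: "nat \<Rightarrow> (('a::{finite,field}) mat \<Rightarrow> complex) \<Rightarrow> 'a mat set" where
  "ker_char N \<psi> = {x \<in> ut N. \<psi> x = 1}"

text \<open>Degree psi(1) of a character (value at the identity, the zero matrix).\<close>
definition char_degree :: "(('a::zero) mat \<Rightarrow> complex) \<Rightarrow> complex" where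
  "char_degree \<psi> = \<psi> (\<lambda>i j. 0)"

definition iota :: "nat \<Rightarrow> (nat \<Rightarrow> nat) \<Rightarrow> nat \<Rightarrow> nat" where
  "iota N w k = card {i \<in> {1..N}. i < inv w k \<and> w i > k}"

definition ut_perm :: "nat \<Rightarrow> (nat \<Rightarrow> nat) \<Rightarrow> ('a::zero) mat set" where
  "ut_perm N w = {x \<in> ut N. \<forall>i j. x i j \<noteq> 0 \<longrightarrow> 0 < j - i \<and> j - i \<le> iota N w i}"

definition largest_in_ker :: "nat \<Rightarrow> (nat \<Rightarrow> nat) \<Rightarrow> (('a::{finite,field}) mat \<Rightarrow> complex) \<Rightarrow> bool" where
  "largest_in_ker N w \<psi> \<longleftrightarrow>
     ut_perm N w \<subseteq> ker_char N \<psi> \<and>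
     (\<forall>v. v permutes {1..N} \<and> ut_perm N v \<subseteq> ker_char N \<psi> \<longrightarrow> ut_perm N v \<subseteq> (ut_perm N w :: 'a mat set))"

definition supchar :: "nat \<Rightarrow> (nat \<Rightarrow> nat) \<Rightarrow> ('a::{finite,field}) mat \<Rightarrow> complex" where
  "supchar N w x = (\<Sum>\<psi>\<in>{\<psi> \<in> irr_chars N. largest_in_ker N w \<psi>}. char_degree \<psi> * \<psi> x)"

definition cA :: "nat \<Rightarrow> nat set \<Rightarrow> nat \<Rightarrow> nat" where
  "cA N A i = N - card {a \<in> A. a > i}"

definition pos :: "nat \<Rightarrow> (nat \<times> nat) set" where
  "pos N = {(i, j). 1 \<le> i \<and> i < j \<and> j \<le> N}"

definition L_pos :: "nat \<Rightarrow> nat set \<Rightarrow> (nat \<times> nat) set" where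
  "L_pos N A = {(i, j) \<in> pos N. i \<in> A \<and> j \<le> cA N A i}"

definition R_pos :: "nat \<Rightarrow> nat set \<Rightarrow> (nat \<times> nat) set" where
  "R_pos N A = {(i, j) \<in> pos N. i \<notin> A \<and> j > cA N A i}"

text \<open>Inverse of the identification ut_A^vee = ut_m: e_ij(t) in ut_A^vee corresponds to
  e_{i-k,j-k}(t), k = #{a in A. a < i}.\<close>
definition emb_dual :: "nat \<Rightarrow> nat \<Rightarrow> nat set \<Rightarrow> ('a::zero) mat \<Rightarrow> 'a mat" where
  "emb_dual m n A u' = (\<lambda>i j. if (i, j) \<in> pos (m + n) \<and> i \<notin> A \<and> j \<le> cA (m + n) A i
      then (let k = card {a \<in> A. a < i} in u' (i - k) (j - k)) else 0)"

text \<open>Inverse of the identification ut_A = ut_n: e_ij(t) in ut_A corresponds to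
  e_{i - #{b<i, b notin A}, j - m}(t).\<close>
definition emb_A :: "nat \<Rightarrow> nat \<Rightarrow> nat set \<Rightarrow> ('a::zero) mat \<Rightarrow> 'a mat" where
  "emb_A m n A u = (\<lambda>i j. if (i, j) \<in> pos (m + n) \<and> i \<in> A \<and> j > cA (m + n) A i
      then u (i - card {b \<in> {1..<i}. b \<notin> A}) (j - m) else 0)"

definition Dela :: "nat \<Rightarrow> nat \<Rightarrow> nat set \<Rightarrow> (('a::{finite,field}) mat \<Rightarrow> complex)
                    \<Rightarrow> 'a mat \<Rightarrow> 'a mat \<Rightarrow> complex" where
  "Dela m n A \<gamma> u' u =
     (let N = m + n; q = of_nat (card (UNIV :: 'a set)) :: complex in
      (1 / q ^ (card (L_pos N A) + card (R_pos N A))) *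
      (\<Sum>l\<in>(supported N (L_pos N A) :: 'a mat set). \<Sum>r\<in>(supported N (R_pos N A) :: 'a mat set).
          (-1 / (q - 1)) ^ card {(i, j). r i j \<noteq> 0} *
          \<gamma> (madd (madd (madd l (emb_dual m n A u')) (emb_A m n A u)) r)))"

text \<open>Standardizations of the first m and the last n letters of w in S_{m+n}
  (extended by the identity outside their domains).\<close>
definition std_le :: "nat \<Rightarrow> nat \<Rightarrow> (nat \<Rightarrow> nat) \<Rightarrow> nat \<Rightarrow> nat" where
  "std_le m n w i = (if i \<in> {1..m}
      then w i - card {j \<in> {m+1..m+n}. w j < w i} else i)"

definition std_gt :: "nat \<Rightarrow> nat \<Rightarrow> (nat \<Rightarrow> nat) \<Rightarrow> nat \<Rightarrow> nat" where
  "std_gt m n w j = (if j \<in> {1..n}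
      then w (j + m) - card {i \<in> {1..m}. w i < w (j + m)} else j)"

end

theory Submission
  imports Defs "HOL-Computational_Algebra.Primes"
begin

text \<open>Since \<open>ut\<^sub>N\<close> is elementary abelian, every irreducible character \<open>\<psi>\<close> is a product over the
  positions \<open>(i, j)\<close> of additive characters \<open>\<chi>\<^sub>i\<^sub>j\<close> of \<open>\<bbbF>\<^sub>q\<close>, the restrictions of \<open>\<psi>\<close> to the root
  subgroups \<open>{e\<^sub>i\<^sub>j(t)}\<close>. Now \<open>ut\<^sub>v \<subseteq> ker \<psi>\<close> iff \<open>\<chi>\<^sub>i\<^sub>j\<close> is trivial whenever \<open>j - i \<le> \<iota>\<^sub>i(v)\<close>, so \<open>ut\<^sub>w\<close>
  is the largest lattice member in \<open>ker \<psi>\<close> iff in addition \<open>\<chi>\<^sub>i\<^sub>j\<close> is nontrivial on the boundary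
  \<open>j - i = \<iota>\<^sub>i(w) + 1\<close>: a trivial boundary component would let a transposition raise \<open>\<iota>\<^sub>i(w)\<close> by
  one and produce a larger member. Orthogonality of additive characters then turns \<open>\<chi>\<^sup>w\<close> into a
  product over positions of an explicit function of the single entry \<open>x\<^sub>i\<^sub>j\<close>.

  Consequently \<open>Dela\<^sub>A(\<chi>\<^sup>w)\<close> is a product of independent sums over the entries in \<open>L\<^sub>A\<close> and \<open>R\<^sub>A\<close>.
  The sum over an \<open>L\<^sub>A\<close> entry vanishes exactly on the boundary \<open>j - i = \<iota>\<^sub>i(w) + 1\<close>, and the
  weighted sum over an \<open>R\<^sub>A\<close> entry vanishes exactly when \<open>j - i \<le> \<iota>\<^sub>i(w)\<close>. As \<open>c\<^sub>i = i + \<beta>\<^sub>i\<close> with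
  \<open>\<beta>\<^sub>i = #{b \<notin> A : b > i}\<close>, nothing vanishes iff \<open>\<iota>\<^sub>i(w) \<ge> \<beta>\<^sub>i\<close> for \<open>i \<in> A\<close> and \<open>\<iota>\<^sub>i(w) \<le> \<beta>\<^sub>i\<close> for
  \<open>i \<notin> A\<close>, and a counting argument shows that this happens iff \<open>w\<^sup>-\<^sup>1(A) = {m+1..m+n}\<close>. In that case
  standardization preserves \<open>\<iota>\<close> (on \<open>A\<close> up to a shift by \<open>\<beta>\<^sub>i\<close>, matched by the shift of \<open>j - i\<close>), so the
  remaining factors over \<open>U\<^sub>A\<^sup>\<or>\<close> and \<open>U\<^sub>A\<close> are those of the supercharacters of \<open>w\<^sub>\<le>\<^sub>m\<close> and
  \<open>w\<^sub>>\<^sub>m\<close>.\<close>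

section \<open>Additive characters of a finite field\<close>

definition add_chars :: "('a::monoid_add \<Rightarrow> complex) set" where
  "add_chars = {\<chi>. (\<forall>x y. \<chi> (x + y) = \<chi> x * \<chi> y) \<and> (\<forall>x. \<chi> x \<noteq> 0)}"

lemma add_char_add: "\<chi> \<in> add_chars \<Longrightarrow> \<chi> (x + y) = \<chi> x * \<chi> y"
  unfolding add_chars_def by blast

lemma add_char_nonzero: "\<chi> \<in> add_chars \<Longrightarrow> \<chi> x \<noteq> 0"
  unfolding add_chars_def by blast

lemma add_char_zero: "\<chi> \<in> add_chars \<Longrightarrow> \<chi> 0 = 1"
  using add_char_add[of \<chi> 0 0] add_char_nonzero[of \<chi> 0] by simp

lemma add_char_of_nat_mult:
  "\<chi> \<in> add_chars \<Longrightarrow> \<chi> (of_nat k * x :: 'a::semiring_1) = \<chi> x ^ k"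
  by (induction k) (auto simp: add_char_zero add_char_add distrib_right)

lemma const_one_in_add_chars: "(\<lambda>_. 1) \<in> add_chars"
  unfolding add_chars_def by simp

lemma finite_add_chars: "finite (add_chars :: ('a::{finite,ring_1} \<Rightarrow> complex) set)"
proof -
  let ?R = "{z::complex. z ^ CHAR('a) = 1}"
  have "finite ?R"
    by (intro finite_roots_unity) (simp add: finite_imp_CHAR_pos Suc_leI)
  moreover have "\<chi> x ^ CHAR('a) = 1" if "\<chi> \<in> add_chars" for \<chi> and x :: 'a
    using add_char_of_nat_mult[OF that, of "CHAR('a)" x] by (simp add: add_char_zero[OF that])
  hence "(add_chars :: ('a \<Rightarrow> complex) set) \<subseteq> PiE UNIV (\<lambda>_. ?R)"
    by (auto simp: PiE_def)
  ultimately show ?thesis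
    by (meson finite_PiE finite_UNIV finite_subset)
qed

lemma prime_CHAR_finite: "prime CHAR('a::{finite,idom})"
  by (rule prime_CHAR_semidom) (simp add: finite_imp_CHAR_pos)

definition add_subgroup :: "'a::ab_group_add set \<Rightarrow> bool" where
  "add_subgroup H \<longleftrightarrow> 0 \<in> H \<and> (\<forall>x\<in>H. \<forall>y\<in>H. x + y \<in> H) \<and> (\<forall>x\<in>H. -x \<in> H)"

lemma add_subgroup_of_nat_mult:
  "add_subgroup H \<Longrightarrow> x \<in> H \<Longrightarrow> of_nat k * (x::'a::ring_1) \<in> H"
  by (induction k) (auto simp: add_subgroup_def distrib_right)

lemma add_subgroup_of_int_mult:
  assumes "add_subgroup H" "x \<in> H"
  shows "of_int k * (x::'a::ring_1) \<in> H"
proof (cases k rule: int_cases)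
  case (nonneg n)
  then show ?thesis using add_subgroup_of_nat_mult[OF assms] by simp
next
  case (neg n)
  then show ?thesis
    using add_subgroup_of_nat_mult[OF assms, of "Suc n"] assms(1)
    unfolding add_subgroup_def by (metis mult_minus_left of_int_minus of_int_of_nat_eq)
qed

lemma exists_maximal_proper_add_subgroup:
  "\<exists>H::'a::{finite,ring_1} set. add_subgroup H \<and> H \<noteq> UNIV \<and>
     (\<forall>K. add_subgroup K \<and> H \<subset> K \<longrightarrow> K = UNIV)"
proof -
  define S where "S = {H::'a set. add_subgroup H \<and> H \<noteq> UNIV}"
  have "(1::'a) \<notin> {0}" by simp
  hence "{0::'a} \<noteq> UNIV" by blast
  hence "{0} \<in> S"
    unfolding S_def add_subgroup_def by auto
  have "\<exists>c. (\<exists>K\<in>S. card K = c) \<and> (\<forall>c'. (\<exists>K\<in>S. card K = c') \<longrightarrow> c' \<le> c)"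
    using \<open>{0} \<in> S\<close>
    by (intro ex_has_greatest_nat[where k="card {0::'a}" and b="card (UNIV::'a set)"])
       (use \<open>{0} \<in> S\<close> in force, auto simp: S_def intro!: psubset_card_mono)
  then obtain H where "H \<in> S" and H_max: "\<And>K. K \<in> S \<Longrightarrow> card K \<le> card H" by blast
  moreover have "K = UNIV" if "add_subgroup K" "H \<subset> K" for K
    using H_max[of K] psubset_card_mono[OF finite that(2)] that
    unfolding S_def by force
  ultimately show ?thesis unfolding S_def by blast
qed

lemma add_subgroup_extend:
  fixes H :: "'a::{finite,ring_1} set"
  assumes "add_subgroup H"
  shows "add_subgroup {h + of_nat j * g | h j. h \<in> H}"
  unfolding add_subgroup_def
proof (intro conjI ballI)
  show "0 \<in> {h + of_nat j * g | h j. h \<in> H}"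
    using assms unfolding add_subgroup_def by (auto intro!: exI[of _ 0])
next
  fix x y assume "x \<in> {h + of_nat j * g | h j. h \<in> H}" "y \<in> {h + of_nat j * g | h j. h \<in> H}"
  then obtain h1 j1 h2 j2 where "x = h1 + of_nat j1 * g" "y = h2 + of_nat j2 * g" "h1 \<in> H" "h2 \<in> H"
    by blast
  with assms show "x + y \<in> {h + of_nat j * g | h j. h \<in> H}"
    unfolding add_subgroup_def
    by (auto intro!: exI[of _ "h1 + h2"] exI[of _ "j1 + j2"] simp: algebra_simps)
next
  fix x assume "x \<in> {h + of_nat j * g | h j. h \<in> H}"
  then obtain h j where x: "x = h + of_nat j * g" "h \<in> H" by blast
  \<comment> \<open>\<open>-j \<equiv> j (p - 1) (mod p)\<close> with \<open>p = CHAR('a)\<close> keeps the coefficient natural\<close>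
  have "(of_nat (j * (CHAR('a) - 1)) :: 'a) = - of_nat j"
    using finite_imp_CHAR_pos[where 'a='a] by (simp add: of_nat_diff algebra_simps)
  with x assms show "- x \<in> {h + of_nat j * g | h j. h \<in> H}"
    unfolding add_subgroup_def
    by (auto intro!: exI[of _ "-h"] exI[of _ "j * (CHAR('a) - 1)"] simp: algebra_simps)
qed

lemma of_int_mult_in_add_subgroup_imp_dvd:
  fixes g :: "'a::{finite,field}"
  assumes H: "add_subgroup H" and g: "g \<notin> H" and d: "of_int d * g \<in> H"
  shows "int CHAR('a) dvd d"
proof (rule ccontr)
  assume "\<not> int CHAR('a) dvd d"
  moreover have "prime (int CHAR('a))"
    using prime_CHAR_finite[where 'a='a] by simp
  ultimately have "coprime (int CHAR('a)) d" by (simp add: prime_imp_coprime)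
  then obtain u v where uv: "u * d + v * int CHAR('a) = 1"
    using bezout_int[of d "int CHAR('a)"] by (metis coprime_iff_gcd_eq_1 gcd.commute)
  have "of_int u * of_int d = (1::'a)"
    using arg_cong[OF uv, of "of_int :: int \<Rightarrow> 'a"] by simp
  hence "of_int u * (of_int d * g) = g" by (metis mult.assoc mult_1)
  thus False using add_subgroup_of_int_mult[OF H d, of u] g by metis
qed
lemma cis_eq_if_dvd_diff:
  assumes "int p dvd int j1 - int j2"
  shows "cis (2 * pi * real j1 / real p) = cis (2 * pi * real j2 / real p)"
proof (cases "p = 0")
  case False
  from assms obtain k where k: "int j1 - int j2 = int p * k" by (elim dvdE)
  hence "real j1 = real j2 + real p * of_int k"
    using arg_cong[OF k, of real_of_int] by simp
  hence "2 * pi * real j1 / real p = 2 * pi * real j2 / real p + 2 * pi * of_int k"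
    using False by (simp add: field_simps)
  thus ?thesis by (simp flip: cis_mult)
qed simp

lemma maximal_add_subgroup_span:
  fixes H :: "'a::{finite,ring_1} set"
  assumes H: "add_subgroup H" and g: "g \<notin> H"
    and H_max: "\<And>K. add_subgroup K \<and> H \<subset> K \<longrightarrow> K = UNIV"
  shows "\<exists>j. \<exists>h\<in>H. x = h + of_nat j * g"
proof -
  have "H \<subseteq> {h + of_nat j * g | h j. h \<in> H}" by (force intro: exI[of _ 0])
  moreover have "g \<in> {h + of_nat j * g | h j. h \<in> H}"
    using H unfolding add_subgroup_def by (force intro: exI[of _ 0] exI[of _ 1])
  ultimately have "H \<subset> {h + of_nat j * g | h j. h \<in> H}" using g by blast
  thus ?thesis using H_max add_subgroup_extend[OF H, of g] by blast
qed

lemma add_subgroup_coset_coeff_cis_eq: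
  fixes H :: "'a::{finite,field} set"
  assumes H: "add_subgroup H" and g: "g \<notin> H" and h: "h \<in> H" "h' \<in> H"
    and eq: "h + of_nat j * g = h' + of_nat j' * g"
  shows "cis (2 * pi * real j / CHAR('a)) = cis (2 * pi * real j' / CHAR('a))"
proof -
  have "of_int (int j - int j') * g = h' - h"
    using eq by (simp add: algebra_simps)
  moreover have "h' - h \<in> H"
    using H h unfolding add_subgroup_def by (metis diff_conv_add_uminus)
  ultimately have "int CHAR('a) dvd int j - int j'"
    using of_int_mult_in_add_subgroup_imp_dvd[OF H g] by metis
  thus ?thesis by (rule cis_eq_if_dvd_diff)
qed

text \<open>A maximal proper additive subgroup \<open>H\<close> has prime index \<open>p = CHAR('a)\<close>; the character sends
  \<open>h + j g\<close> to \<open>exp (2 \<pi> i j / p)\<close>.\<close>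

lemma exists_nontrivial_add_char:
  "\<exists>\<chi>\<in>(add_chars :: ('a::{finite,field} \<Rightarrow> complex) set). \<exists>s. \<chi> s \<noteq> 1"
proof -
  obtain H :: "'a set" where H: "add_subgroup H" "H \<noteq> UNIV"
    and H_max: "\<And>K. add_subgroup K \<and> H \<subset> K \<longrightarrow> K = UNIV"
    using exists_maximal_proper_add_subgroup by blast
  obtain g where g: "g \<notin> H" using H(2) by blast
  note span = maximal_add_subgroup_span[OF H(1) g H_max]
  define p where "p = CHAR('a)"
  define \<chi> where "\<chi> x = cis (2 * pi * real (SOME j. \<exists>h\<in>H. x = h + of_nat j * g) / p)" for x
  have \<chi>_eq: "\<chi> (h + of_nat j * g) = cis (2 * pi * real j / p)" if "h \<in> H" for h j
  proof -
    define j' where "j' = (SOME j'. \<exists>h'\<in>H. h + of_nat j * g = h' + of_nat j' * g)"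
    obtain h' where "h' \<in> H" "h + of_nat j * g = h' + of_nat j' * g"
      using someI_ex[OF span] unfolding j'_def by blast
    thus ?thesis
      using add_subgroup_coset_coeff_cis_eq[OF H(1) g that] unfolding \<chi>_def j'_def p_def by simp
  qed
  have "\<chi> \<in> add_chars"
    unfolding add_chars_def
  proof (intro CollectI conjI allI)
    fix x y
    obtain j1 h1 where x: "h1 \<in> H" "x = h1 + of_nat j1 * g" using span[of x] by blast
    obtain j2 h2 where y: "h2 \<in> H" "y = h2 + of_nat j2 * g" using span[of y] by blast
    have xy: "x + y = (h1 + h2) + of_nat (j1 + j2) * g" using x y by (simp add: algebra_simps)
    have "h1 + h2 \<in> H" using x y H(1) unfolding add_subgroup_def by blast
    hence "\<chi> (x + y) = cis (2 * pi * real (j1 + j2) / p)" unfolding xy by (rule \<chi>_eq)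
    also have "\<dots> = \<chi> x * \<chi> y"
      using x y by (simp add: \<chi>_eq cis_mult add_divide_distrib distrib_left)
    finally show "\<chi> (x + y) = \<chi> x * \<chi> y" .
  qed (simp add: \<chi>_def)
  moreover have "\<chi> g \<noteq> 1"
  proof -
    have "p \<ge> 2"
      unfolding p_def using prime_CHAR_finite[where 'a='a] by (rule prime_ge_2_nat)
    hence "cis (2 * pi * real 1 / p) \<noteq> cis (2 * pi * real 0 / p)"
      using inj_onD[OF bij_betw_imp_inj_on[OF bij_betw_roots_unity], of p 1 0] by auto
    moreover have "\<chi> g = cis (2 * pi * real 1 / p)"
      using \<chi>_eq[of 0 1] H(1) unfolding add_subgroup_def by simp
    ultimately show ?thesis by simp
  qed
  ultimately show ?thesis by blast
qed

lemma add_char_separates: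
  assumes "(t::'a::{finite,field}) \<noteq> 0"
  shows "\<exists>\<chi>\<in>add_chars. \<chi> t \<noteq> 1"
proof -
  obtain \<chi> s where \<chi>: "\<chi> \<in> (add_chars :: ('a \<Rightarrow> complex) set)" "\<chi> s \<noteq> 1"
    using exists_nontrivial_add_char by blast
  have "(\<lambda>x. \<chi> (s * x / t)) \<in> add_chars"
    unfolding add_chars_def
    by (simp add: add_char_add[OF \<chi>(1)] add_char_nonzero[OF \<chi>(1)] distrib_left add_divide_distrib)
  moreover have "\<chi> (s * t / t) \<noteq> 1" using \<chi>(2) assms by simp
  ultimately show ?thesis by (intro bexI[of _ "\<lambda>x. \<chi> (s * x / t)"]) simp_all
qed

lemma sum_add_char_values:
  assumes "\<chi> \<in> (add_chars :: ('a::{finite,ab_group_add} \<Rightarrow> complex) set)" and "\<chi> s \<noteq> 1"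
  shows "(\<Sum>x\<in>UNIV. \<chi> x) = 0"
proof -
  have "(\<Sum>x\<in>UNIV. \<chi> (s + x)) = (\<Sum>x\<in>UNIV. \<chi> x)"
    by (rule sum.reindex_bij_witness[of _ "\<lambda>x. x - s" "\<lambda>x. s + x"]) auto
  hence "\<chi> s * (\<Sum>x\<in>UNIV. \<chi> x) = (\<Sum>x\<in>UNIV. \<chi> x)"
    by (simp add: sum_distrib_left add_char_add[OF assms(1)])
  thus ?thesis using assms(2) by (metis mult_cancel_right2)
qed

lemma sum_add_chars_at_nonzero:
  assumes "(t::'a::{finite,field}) \<noteq> 0"
  shows "(\<Sum>\<chi>\<in>add_chars. \<chi> t) = 0"
proof -
  obtain \<mu> where \<mu>: "\<mu> \<in> add_chars" "\<mu> t \<noteq> 1" using add_char_separates[OF assms] by blast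
  have "(\<Sum>\<chi>\<in>add_chars. (\<lambda>x. \<mu> x * \<chi> x) t) = (\<Sum>\<chi>\<in>add_chars. \<chi> t)"
  proof (rule sum.reindex_bij_witness[of _ "\<lambda>\<chi> x. \<chi> x / \<mu> x" "\<lambda>\<chi> x. \<mu> x * \<chi> x"])
    fix \<chi> :: "'a \<Rightarrow> complex" assume \<chi>: "\<chi> \<in> add_chars"
    show "(\<lambda>x. \<chi> x / \<mu> x) \<in> add_chars" "(\<lambda>x. \<mu> x * \<chi> x) \<in> add_chars"
      unfolding add_chars_def
      by (simp_all add: add_char_add[OF \<chi>] add_char_nonzero[OF \<chi>]
                        add_char_add[OF \<mu>(1)] add_char_nonzero[OF \<mu>(1)])
    show "(\<lambda>x. \<mu> x * (\<chi> x / \<mu> x)) = \<chi>" "(\<lambda>x. \<mu> x * \<chi> x / \<mu> x) = \<chi>"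
      using \<mu>(1) by (auto simp: add_char_nonzero)
  qed simp
  hence "\<mu> t * (\<Sum>\<chi>\<in>add_chars. \<chi> t) = (\<Sum>\<chi>\<in>add_chars. \<chi> t)"
    by (simp add: sum_distrib_left)
  thus ?thesis using \<mu>(2) by (metis mult_cancel_right2)
qed

lemma card_add_chars: "card (add_chars :: ('a::{finite,field} \<Rightarrow> complex) set) = card (UNIV :: 'a set)"
proof -
  have "(\<Sum>t\<in>UNIV. \<Sum>\<chi>\<in>add_chars. \<chi> (t::'a)) =
        (\<Sum>t\<in>UNIV. if t = (0::'a) then of_nat (card (add_chars :: ('a \<Rightarrow> complex) set)) else 0)"
    by (rule sum.cong) (simp_all add: sum_add_chars_at_nonzero add_char_zero)
  hence "of_nat (card (add_chars :: ('a \<Rightarrow> complex) set)) = (\<Sum>t\<in>UNIV. \<Sum>\<chi>\<in>add_chars. \<chi> (t::'a))"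
    by simp
  also have "\<dots> = (\<Sum>\<chi>\<in>add_chars. \<Sum>t\<in>UNIV. \<chi> (t::'a))"
    by (rule sum.swap)
  also have "\<dots> = (\<Sum>\<chi>\<in>add_chars. if \<chi> = (\<lambda>_::'a. 1) then of_nat (card (UNIV :: 'a set)) else 0)"
    by (rule sum.cong) (auto intro: sum_add_char_values)
  also have "\<dots> = of_nat (card (UNIV :: 'a set))"
    using const_one_in_add_chars[where 'a='a] finite_add_chars[where 'a='a] by (simp add: sum.delta')
  finally show ?thesis by (simp only: of_nat_eq_iff)
qed

lemma sum_add_chars:
  "(\<Sum>\<chi>\<in>add_chars. \<chi> (t::'a::{finite,field})) = (if t = 0 then of_nat (card (UNIV :: 'a set)) else 0)"
  by (simp add: sum_add_chars_at_nonzero add_char_zero card_add_chars)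

lemma sum_nontrivial_add_chars:
  "(\<Sum>\<chi>\<in>add_chars - {\<lambda>_. 1}. \<chi> (t::'a::{finite,field})) = (if t = 0 then of_nat (card (UNIV :: 'a set)) - 1 else - 1)"
proof -
  have "(\<Sum>\<chi>\<in>add_chars - {\<lambda>_. 1}. \<chi> t) = (\<Sum>\<chi>\<in>add_chars. \<chi> t) - 1"
    using sum.remove[OF finite_add_chars const_one_in_add_chars, of "\<lambda>\<chi>. \<chi> t"] by simp
  thus ?thesis by (simp add: sum_add_chars)
qed

section \<open>Raising one inversion count by a transposition\<close>

lemma permutes_inv_in:
  assumes w: "w permutes S" and v: "v \<in> S"
  shows "inv w v \<in> S" "w (inv w v) = v"
  using v permutes_in_image[OF permutes_inv[OF w]] permutes_inverses(1)[OF w] by auto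

lemma card_perm_values_greater:
  assumes w: "w permutes {1..N}"
  shows "card {r \<in> {1..N}. i < w r} = N - i"
proof -
  have "w ` {r \<in> {1..N}. i < w r} = {k \<in> {1..N}. i < k}"
  proof
    show "w ` {r \<in> {1..N}. i < w r} \<subseteq> {k \<in> {1..N}. i < k}"
      using permutes_in_image[OF w] by auto
    show "{k \<in> {1..N}. i < k} \<subseteq> w ` {r \<in> {1..N}. i < w r}"
    proof
      fix k assume k: "k \<in> {k \<in> {1..N}. i < k}"
      have "w (inv w k) = k" by (rule permutes_inverses(1)[OF w])
      moreover have "inv w k \<in> {1..N}" using k permutes_in_image[OF permutes_inv[OF w]] by auto
      ultimately show "k \<in> w ` {r \<in> {1..N}. i < w r}" using k by (intro image_eqI[of _ _ "inv w k"]) auto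
    qed
  qed
  moreover have "inj_on w {r \<in> {1..N}. i < w r}"
    using permutes_inj[OF w] by (auto intro: inj_on_subset)
  ultimately have "card {r \<in> {1..N}. i < w r} = card {k \<in> {1..N}. i < k}"
    by (metis card_image)
  also have "{k \<in> {1..N}. i < k} = {Suc i..N}" by auto
  finally show ?thesis by simp
qed

lemma iota_le:
  assumes "w permutes {1..N}"
  shows "iota N w i \<le> N - i"
proof -
  have "iota N w i \<le> card {r \<in> {1..N}. i < w r}"
    unfolding iota_def by (intro card_mono) auto
  thus ?thesis using card_perm_values_greater[OF assms] by simp
qed

context
  fixes N :: nat and w :: "nat \<Rightarrow> nat" and s t :: nat
  assumes w: "w permutes {1..N}" and s: "s \<in> {1..N}" and t: "t \<in> {1..N}" and st: "s < t"
    and ascent: "w s < w t" and between: "\<And>r. s < r \<Longrightarrow> r < t \<Longrightarrow> w r < w s"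
begin

lemma swap_perm_permutes: "w \<circ> transpose s t permutes {1..N}"
  by (rule permutes_compose[OF permutes_swap_id[OF s t] w])

lemma inv_swap_perm: "inv (w \<circ> transpose s t) k = transpose s t (inv w k)"
proof -
  have "(w \<circ> transpose s t) (transpose s t (inv w k)) = k"
    using permutes_inverses(1)[OF w] by simp
  hence "inv (w \<circ> transpose s t) k =
         inv (w \<circ> transpose s t) ((w \<circ> transpose s t) (transpose s t (inv w k)))"
    by simp
  also have "\<dots> = transpose s t (inv w k)"
    by (rule permutes_inverses(2)[OF swap_perm_permutes])
  finally show ?thesis .
qed

lemma iota_swap_self: "iota N (w \<circ> transpose s t) (w s) = Suc (iota N w (w s))"
proof -
  have inv_w: "inv w (w s) = s" by (rule permutes_inverses(2)[OF w])
  have "{r \<in> {1..N}. r < t \<and> w s < w (transpose s t r)} = insert s {r \<in> {1..N}. r < s \<and> w s < w r}"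
  proof (intro set_eqI iffI)
    fix r assume r: "r \<in> {r \<in> {1..N}. r < t \<and> w s < w (transpose s t r)}"
    show "r \<in> insert s {r \<in> {1..N}. r < s \<and> w s < w r}"
    proof (cases "r = s")
      case False
      with r have "transpose s t r = r" by auto
      with r between[of r] show ?thesis by (cases "s < r") auto
    qed simp
  qed (use s st ascent in auto)
  moreover have "s \<notin> {r \<in> {1..N}. r < s \<and> w s < w r}" by simp
  ultimately show ?thesis
    unfolding iota_def inv_swap_perm inv_w by simp
qed

lemma inversions_swap_left:
  assumes "r0 \<noteq> s" "r0 < t"
  shows "{r \<in> {1..N}. r < transpose s t r0 \<and> w r0 < w (transpose s t r)} =
         {r \<in> {1..N}. r < r0 \<and> w r0 < w r}"
proof (cases "r0 < s")
  case True
  hence "transpose s t r0 = r0" using assms by auto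
  moreover have "r < r0 \<Longrightarrow> transpose s t r = r" for r using True st by auto
  ultimately show ?thesis by auto
next
  case False
  \<comment> \<open>here \<open>s < r0 < t\<close>, so \<open>w r0 < w s < w t\<close>: swapping \<open>s\<close> and \<open>t\<close> keeps both inversions\<close>
  hence "s < r0" using assms(1) by simp
  hence "w r0 < w s" using between[OF _ assms(2)] by simp
  have "transpose s t r0 = r0" using assms by auto
  moreover have "(w r0 < w (transpose s t r)) = (w r0 < w r)" if "r < r0" for r
    using that \<open>s < r0\<close> assms(2) \<open>w r0 < w s\<close> ascent by (cases "r = s") auto
  ultimately show ?thesis by auto
qed

lemma inversions_swap_at_right_end:
  "{r \<in> {1..N}. r < transpose s t t \<and> w t < w (transpose s t r)} = {r \<in> {1..N}. r < t \<and> w t < w r}"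
proof (intro set_eqI iffI)
  fix r assume "r \<in> {r \<in> {1..N}. r < transpose s t t \<and> w t < w (transpose s t r)}"
  hence "r \<in> {1..N}" "r < s" "w t < w (transpose s t r)" by auto
  moreover hence "transpose s t r = r" using st by auto
  ultimately show "r \<in> {r \<in> {1..N}. r < t \<and> w t < w r}" using st by auto
next
  fix r assume r: "r \<in> {r \<in> {1..N}. r < t \<and> w t < w r}"
  have "r < s"
  proof (rule ccontr)
    assume "\<not> r < s"
    moreover have "r \<noteq> s" using r ascent by auto
    ultimately have "s < r" by simp
    thus False using between[of r] r ascent by auto
  qed
  moreover hence "transpose s t r = r" using st by auto
  ultimately show "r \<in> {r \<in> {1..N}. r < transpose s t t \<and> w t < w (transpose s t r)}"
    using r by auto
qed

lemma inversions_swap_right: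
  assumes "t < r0"
  shows "{r \<in> {1..N}. r < r0 \<and> w r0 < w r} =
         transpose s t ` {r \<in> {1..N}. r < transpose s t r0 \<and> w r0 < w (transpose s t r)}"
proof -
  have "transpose s t r0 = r0" using assms st by auto
  thus ?thesis
  proof (intro set_eqI iffI)
    fix r assume r: "r \<in> {r \<in> {1..N}. r < r0 \<and> w r0 < w r}"
    have "transpose s t r \<in> {r \<in> {1..N}. r < transpose s t r0 \<and> w r0 < w (transpose s t r)}"
      using r s t st assms \<open>transpose s t r0 = r0\<close> by (auto simp: transpose_def)
    moreover have "r = transpose s t (transpose s t r)" by simp
    ultimately show "r \<in> transpose s t ` {r \<in> {1..N}. r < transpose s t r0 \<and> w r0 < w (transpose s t r)}"
      by blast
  next
    fix r assume "r \<in> transpose s t ` {r \<in> {1..N}. r < transpose s t r0 \<and> w r0 < w (transpose s t r)}"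
    then obtain r' where "r = transpose s t r'" "r' \<in> {1..N}" "r' < r0" "w r0 < w r"
      using \<open>transpose s t r0 = r0\<close> by auto
    thus "r \<in> {r \<in> {1..N}. r < r0 \<and> w r0 < w r}"
      using s t st assms by (auto simp: transpose_def)
  qed
qed

lemma iota_swap_other:
  assumes k: "k \<in> {1..N}" "k \<noteq> w s"
  shows "iota N (w \<circ> transpose s t) k = iota N w k"
proof -
  define r0 where "r0 = inv w k"
  have r0: "w r0 = k" "r0 \<noteq> s"
    unfolding r0_def using k permutes_inverses(1)[OF w] by auto
  let ?V = "{r \<in> {1..N}. r < transpose s t r0 \<and> w r0 < w (transpose s t r)}"
  let ?W = "{r \<in> {1..N}. r < r0 \<and> w r0 < w r}"
  have "iota N (w \<circ> transpose s t) k = card ?V" "iota N w k = card ?W"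
    unfolding iota_def inv_swap_perm r0_def r0(1)[unfolded r0_def] by simp_all
  moreover have "card ?V = card ?W"
  proof -
    consider "r0 < t" | "r0 = t" | "t < r0" by linarith
    thus ?thesis
    proof cases
      case 3
      have "card ?W = card (transpose s t ` ?V)"
        using inversions_swap_right[OF 3] by (rule arg_cong)
      also have "\<dots> = card ?V"
        by (rule card_image, rule inj_on_inverseI[where g = "transpose s t"]) simp
      finally show ?thesis by simp
    qed (use inversions_swap_left[OF r0(2)] inversions_swap_at_right_end in auto)
  qed
  ultimately show ?thesis by simp
qed

end

lemma exists_perm_iota_Suc:
  assumes w: "w permutes {1..N}" and i: "i \<in> {1..N}" and lt: "iota N w i < N - i"
  shows "\<exists>v. v permutes {1..N} \<and> iota N v i = Suc (iota N w i) \<and>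
             (\<forall>k\<in>{1..N}. k \<noteq> i \<longrightarrow> iota N v k = iota N w k)"
proof -
  define s where "s = inv w i"
  have s: "s \<in> {1..N}" "w s = i"
    unfolding s_def using i permutes_in_image[OF permutes_inv[OF w]] permutes_inverses(1)[OF w]
    by auto
  define T where "T = {t \<in> {1..N}. s < t \<and> i < w t}"
  have "T \<noteq> {}"
  proof
    assume "T = {}"
    \<comment> \<open>then every value above \<open>i\<close> sits left of \<open>s\<close>, so \<open>iota N w i = N - i\<close>\<close>
    hence "{r \<in> {1..N}. i < w r} \<subseteq> {r \<in> {1..N}. r < s \<and> i < w r}"
      unfolding T_def using s by (auto simp: not_less_iff_gr_or_eq)
    hence "card {r \<in> {1..N}. i < w r} \<le> iota N w i"
      unfolding iota_def s_def by (intro card_mono) auto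
    thus False using card_perm_values_greater[OF w, of i] lt by simp
  qed
  define t where "t = Min T"
  have "finite T" unfolding T_def by simp
  hence "t \<in> T" and t_min: "\<And>r. r \<in> T \<Longrightarrow> t \<le> r"
    unfolding t_def using \<open>T \<noteq> {}\<close> by (auto intro: Min_in)
  hence t: "t \<in> {1..N}" "s < t" "i < w t" unfolding T_def by auto
  have between: "w r < w s" if "s < r" "r < t" for r
  proof -
    have "r \<notin> T" using t_min[of r] that by auto
    moreover have "w r \<noteq> w s" using that permutes_inj[OF w] by (metis inj_eq less_irrefl)
    ultimately show ?thesis using that s t unfolding T_def by auto
  qed
  show ?thesis
    using swap_perm_permutes[OF w s(1) t(1,2) _ between]
      iota_swap_self[OF w s(1) t(1,2) _ between] iota_swap_other[OF w s(1) t(1,2) _ between] s t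
    by auto
qed

section \<open>Characters of the additive group of strictly upper triangular matrices\<close>

definition elem_mat :: "nat \<Rightarrow> nat \<Rightarrow> 'a::zero \<Rightarrow> 'a mat" where
  "elem_mat i j t = (\<lambda>a b. if a = i \<and> b = j then t else 0)"

lemma elem_mat_zero: "elem_mat i j 0 = (\<lambda>a b. 0)"
  unfolding elem_mat_def by auto

lemma elem_mat_add: "elem_mat i j (s + t :: 'a::monoid_add) = madd (elem_mat i j s) (elem_mat i j t)"
  unfolding elem_mat_def madd_def by (intro ext) simp

lemma finite_pos: "finite (pos N)"
proof -
  have "pos N \<subseteq> {1..N} \<times> {1..N}" unfolding pos_def by auto
  thus ?thesis by (rule finite_subset) auto
qed

lemma elem_mat_in_ut: "p \<in> pos N \<Longrightarrow> elem_mat (fst p) (snd p) t \<in> ut N"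
  unfolding pos_def ut_def elem_mat_def by auto

lemma zero_in_ut: "(\<lambda>a b. 0) \<in> ut N"
  unfolding ut_def by auto

lemma madd_in_ut:
  assumes "x \<in> ut N" "y \<in> ut N"
  shows "madd x y \<in> (ut N :: 'a::monoid_add mat set)"
proof -
  have "x i j + y i j \<noteq> 0 \<Longrightarrow> x i j \<noteq> 0 \<or> y i j \<noteq> 0" for i j by auto
  thus ?thesis using assms unfolding ut_def madd_def by blast
qed

lemma irr_char_madd:
  "\<psi> \<in> irr_chars N \<Longrightarrow> x \<in> ut N \<Longrightarrow> y \<in> ut N \<Longrightarrow> \<psi> (madd x y) = \<psi> x * \<psi> y"
  unfolding irr_chars_def by blast

lemma irr_char_nonzero: "\<psi> \<in> irr_chars N \<Longrightarrow> x \<in> ut N \<Longrightarrow> \<psi> x \<noteq> 0"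
  unfolding irr_chars_def by blast

lemma irr_char_outside: "\<psi> \<in> irr_chars N \<Longrightarrow> x \<notin> ut N \<Longrightarrow> \<psi> x = 0"
  unfolding irr_chars_def by blast

lemma irr_char_zero:
  assumes "\<psi> \<in> irr_chars N"
  shows "\<psi> (\<lambda>a b. 0) = 1"
proof -
  have "madd (\<lambda>a b. 0) (\<lambda>a b. 0) = (\<lambda>a b. 0 :: 'a)" unfolding madd_def by simp
  hence "\<psi> (\<lambda>a b. 0) = \<psi> (\<lambda>a b. 0) * \<psi> (\<lambda>a b. 0)"
    using irr_char_madd[OF assms zero_in_ut zero_in_ut] by simp
  thus ?thesis using irr_char_nonzero[OF assms zero_in_ut] by simp
qed

lemma irr_char_eq_prod_elem:
  assumes \<psi>: "\<psi> \<in> irr_chars N" and x: "x \<in> ut N"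
  shows "\<psi> x = (\<Prod>p\<in>pos N. \<psi> (elem_mat (fst p) (snd p) (x (fst p) (snd p))))"
proof -
  define restr where "restr S = (\<lambda>a b. if (a, b) \<in> S then x a b else 0)" for S
  have restr_in_ut: "restr S \<in> ut N" for S
    using x unfolding ut_def restr_def by auto
  have "\<psi> (restr S) = (\<Prod>p\<in>S. \<psi> (elem_mat (fst p) (snd p) (x (fst p) (snd p))))"
    if "finite S" "S \<subseteq> pos N" for S
    using that
  proof (induction S rule: finite_induct)
    case empty
    have "restr {} = (\<lambda>a b. 0)" unfolding restr_def by simp
    thus ?case using irr_char_zero[OF \<psi>] by simp
  next
    case (insert p S)
    have "restr (insert p S) = madd (elem_mat (fst p) (snd p) (x (fst p) (snd p))) (restr S)"
      using insert(2) unfolding restr_def madd_def elem_mat_def by (auto simp: fun_eq_iff)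
    hence "\<psi> (restr (insert p S)) = \<psi> (elem_mat (fst p) (snd p) (x (fst p) (snd p))) * \<psi> (restr S)"
      using irr_char_madd[OF \<psi> elem_mat_in_ut restr_in_ut] insert(4) by auto
    thus ?case using insert by simp
  qed
  moreover have "restr (pos N) = x"
    using x unfolding restr_def ut_def pos_def by (auto simp: fun_eq_iff)
  ultimately show ?thesis using finite_pos by auto
qed

text \<open>A character of \<open>ut N\<close> is determined by its restrictions to the root subgroups
  \<open>{e_ij(t)}\<close>, each of which is an additive character of the field.\<close>

definition char_comps :: "nat \<Rightarrow> ('a::{finite,field} mat \<Rightarrow> complex) \<Rightarrow> nat \<times> nat \<Rightarrow> 'a \<Rightarrow> complex" where
  "char_comps N \<psi> = (\<lambda>p\<in>pos N. \<lambda>t. \<psi> (elem_mat (fst p) (snd p) t))"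

definition char_of_comps :: "nat \<Rightarrow> (nat \<times> nat \<Rightarrow> 'a::{finite,field} \<Rightarrow> complex) \<Rightarrow> 'a mat \<Rightarrow> complex" where
  "char_of_comps N L = (\<lambda>x. if x \<in> ut N then \<Prod>p\<in>pos N. L p (x (fst p) (snd p)) else 0)"

lemma char_comps_apply: "p \<in> pos N \<Longrightarrow> char_comps N \<psi> p t = \<psi> (elem_mat (fst p) (snd p) t)"
  unfolding char_comps_def by simp

lemma char_comps_in_PiE:
  assumes \<psi>: "\<psi> \<in> irr_chars N"
  shows "char_comps N \<psi> \<in> PiE (pos N) (\<lambda>_. add_chars)"
proof -
  have "(\<lambda>t. \<psi> (elem_mat (fst p) (snd p) t)) \<in> add_chars" if p: "p \<in> pos N" for p
    unfolding add_chars_def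
  proof (intro CollectI conjI allI)
    fix s t :: 'a
    show "\<psi> (elem_mat (fst p) (snd p) (s + t)) = \<psi> (elem_mat (fst p) (snd p) s) * \<psi> (elem_mat (fst p) (snd p) t)"
      unfolding elem_mat_add by (rule irr_char_madd[OF \<psi> elem_mat_in_ut[OF p] elem_mat_in_ut[OF p]])
    show "\<psi> (elem_mat (fst p) (snd p) s) \<noteq> 0" by (rule irr_char_nonzero[OF \<psi> elem_mat_in_ut[OF p]])
  qed
  thus ?thesis unfolding char_comps_def by auto
qed

lemma char_of_comps_in_irr_chars:
  assumes L: "L \<in> PiE (pos N) (\<lambda>_. add_chars)"
  shows "char_of_comps N L \<in> irr_chars N"
  unfolding irr_chars_def
proof (intro CollectI conjI ballI allI impI)
  fix x y :: "'a mat" assume x: "x \<in> ut N" and y: "y \<in> ut N"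
  have "L p (madd x y (fst p) (snd p)) = L p (x (fst p) (snd p)) * L p (y (fst p) (snd p))"
    if "p \<in> pos N" for p
    unfolding madd_def using PiE_mem[OF L that] by (rule add_char_add)
  thus "char_of_comps N L (madd x y) = char_of_comps N L x * char_of_comps N L y"
    unfolding char_of_comps_def using x y madd_in_ut[OF x y] by (simp add: prod.distrib)
next
  fix x :: "'a mat" assume "x \<in> ut N"
  moreover have "\<forall>p\<in>pos N. L p (x (fst p) (snd p)) \<noteq> 0"
    using add_char_nonzero[OF PiE_mem[OF L]] by simp
  ultimately show "char_of_comps N L x \<noteq> 0"
    unfolding char_of_comps_def using finite_pos by simp
qed (simp add: char_of_comps_def)

lemma char_of_comps_char_comps: "\<psi> \<in> irr_chars N \<Longrightarrow> char_of_comps N (char_comps N \<psi>) = \<psi>"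
  by (auto simp: fun_eq_iff char_of_comps_def char_comps_def irr_char_outside irr_char_eq_prod_elem
           intro!: prod.cong)

lemma char_comps_char_of_comps:
  assumes L: "L \<in> PiE (pos N) (\<lambda>_. add_chars)"
  shows "char_comps N (char_of_comps N L) = L"
proof (intro ext)
  fix p t
  show "char_comps N (char_of_comps N L) p t = L p t"
  proof (cases "p \<in> pos N")
    case False
    thus ?thesis using L unfolding char_comps_def by auto
  next
    case True
    have "char_comps N (char_of_comps N L) p t = (\<Prod>q\<in>pos N. L q (elem_mat (fst p) (snd p) t (fst q) (snd q)))"
      unfolding char_comps_def char_of_comps_def using True elem_mat_in_ut[OF True, of t] by simp
    also have "\<dots> = L p (elem_mat (fst p) (snd p) t (fst p) (snd p)) *
        (\<Prod>q\<in>pos N - {p}. L q (elem_mat (fst p) (snd p) t (fst q) (snd q)))"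
      by (rule prod.remove[OF finite_pos True])
    also have "(\<Prod>q\<in>pos N - {p}. L q (elem_mat (fst p) (snd p) t (fst q) (snd q))) = 1"
    proof (rule prod.neutral, rule ballI)
      fix q assume q: "q \<in> pos N - {p}"
      hence "elem_mat (fst p) (snd p) t (fst q) (snd q) = 0"
        unfolding elem_mat_def by (auto simp: prod_eq_iff)
      thus "L q (elem_mat (fst p) (snd p) t (fst q) (snd q)) = 1"
        using add_char_zero[OF PiE_mem[OF L]] q by simp
    qed
    finally show ?thesis unfolding elem_mat_def by simp
  qed
qed

lemma ut_perm_subset_ker_iff:
  assumes \<psi>: "\<psi> \<in> irr_chars N"
  shows "ut_perm N v \<subseteq> ker_char N \<psi> \<longleftrightarrow>
         (\<forall>p\<in>pos N. snd p - fst p \<le> iota N v (fst p) \<longrightarrow> char_comps N \<psi> p = (\<lambda>_. 1))"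
proof
  assume ker: "ut_perm N v \<subseteq> ker_char N \<psi>"
  show "\<forall>p\<in>pos N. snd p - fst p \<le> iota N v (fst p) \<longrightarrow> char_comps N \<psi> p = (\<lambda>_. 1)"
  proof (intro ballI impI ext)
    fix p and t :: 'a assume p: "p \<in> pos N" and d: "snd p - fst p \<le> iota N v (fst p)"
    have "elem_mat (fst p) (snd p) t \<in> ut_perm N v"
      unfolding ut_perm_def using elem_mat_in_ut[OF p] p d by (auto simp: elem_mat_def pos_def)
    hence "\<psi> (elem_mat (fst p) (snd p) t) = 1" using ker unfolding ker_char_def by auto
    thus "char_comps N \<psi> p t = 1" using char_comps_apply[OF p, of \<psi> t] by simp
  qed
next
  assume triv: "\<forall>p\<in>pos N. snd p - fst p \<le> iota N v (fst p) \<longrightarrow> char_comps N \<psi> p = (\<lambda>_. 1)"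
  show "ut_perm N v \<subseteq> ker_char N \<psi>"
  proof
    fix x :: "'a mat" assume x: "x \<in> ut_perm N v"
    hence xu: "x \<in> ut N" unfolding ut_perm_def by simp
    have "\<psi> (elem_mat (fst p) (snd p) (x (fst p) (snd p))) = 1" if p: "p \<in> pos N" for p
    proof (cases "x (fst p) (snd p) = 0")
      case True thus ?thesis by (simp add: elem_mat_zero irr_char_zero[OF \<psi>])
    next
      case False
      hence "snd p - fst p \<le> iota N v (fst p)" using x unfolding ut_perm_def by auto
      hence "char_comps N \<psi> p = (\<lambda>_. 1)" using triv p by blast
      thus ?thesis using char_comps_apply[OF p, of \<psi>] by metis
    qed
    hence "\<psi> x = 1" by (simp add: irr_char_eq_prod_elem[OF \<psi> xu])
    thus "x \<in> ker_char N \<psi>" unfolding ker_char_def using xu by simp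
  qed
qed

text \<open>The components that may occur at position \<open>(i, j)\<close> in a character \<open>\<psi>\<close> for which
  \<open>ut_perm N w\<close> is the largest lattice member inside \<open>ker \<psi>\<close> (see \<open>largest_in_ker_iff\<close>).\<close>

definition allowed_comps :: "nat \<Rightarrow> (nat \<Rightarrow> nat) \<Rightarrow> nat \<times> nat \<Rightarrow> ('a::{finite,field} \<Rightarrow> complex) set" where
  "allowed_comps N w p = (if snd p - fst p \<le> iota N w (fst p) then {\<lambda>_. 1}
     else if snd p - fst p = Suc (iota N w (fst p)) then add_chars - {\<lambda>_. 1} else add_chars)"

lemma allowed_comps_subset: "allowed_comps N w p \<subseteq> add_chars"
  unfolding allowed_comps_def using const_one_in_add_chars by auto

lemma finite_allowed_comps: "finite (allowed_comps N w p)"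
  using finite_subset[OF allowed_comps_subset finite_add_chars] .

lemma char_comps_in_allowed_comps_iff:
  assumes \<psi>: "\<psi> \<in> irr_chars N"
  shows "char_comps N \<psi> \<in> PiE (pos N) (allowed_comps N w) \<longleftrightarrow>
    (\<forall>p\<in>pos N. snd p - fst p \<le> iota N w (fst p) \<longrightarrow> char_comps N \<psi> p = (\<lambda>_. 1)) \<and>
    (\<forall>p\<in>pos N. snd p - fst p = Suc (iota N w (fst p)) \<longrightarrow> char_comps N \<psi> p \<noteq> (\<lambda>_. 1))"
    (is "?c \<in> _ \<longleftrightarrow> ?A \<and> ?C")
proof
  assume "?c \<in> PiE (pos N) (allowed_comps N w)"
  hence al: "?c p \<in> allowed_comps N w p" if "p \<in> pos N" for p using that by (rule PiE_mem)
  show "?A \<and> ?C"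
  proof (intro conjI ballI impI)
    fix p assume p: "p \<in> pos N" and "snd p - fst p \<le> iota N w (fst p)"
    thus "?c p = (\<lambda>_. 1)" using al[OF p] unfolding allowed_comps_def by simp
  next
    fix p assume p: "p \<in> pos N" and "snd p - fst p = Suc (iota N w (fst p))"
    thus "?c p \<noteq> (\<lambda>_. 1)" using al[OF p] unfolding allowed_comps_def by simp
  qed
next
  assume AC: "?A \<and> ?C"
  have "?c p \<in> allowed_comps N w p" if p: "p \<in> pos N" for p
    using PiE_mem[OF char_comps_in_PiE[OF \<psi>] p] AC p const_one_in_add_chars
    unfolding allowed_comps_def by auto
  moreover have "?c p = undefined" if "p \<notin> pos N" for p
    using that unfolding char_comps_def by simp
  ultimately show "?c \<in> PiE (pos N) (allowed_comps N w)" unfolding PiE_def extensional_def by auto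
qed

text \<open>Maximality forces a nontrivial component on the boundary of \<open>ut_perm N w\<close>: otherwise the
  transposition of \<open>exists_perm_iota_Suc\<close> would produce a larger lattice member in the kernel.\<close>

lemma largest_in_ker_boundary_nontrivial:
  assumes \<psi>: "\<psi> \<in> irr_chars N" and w: "w permutes {1..N}" and largest: "largest_in_ker N w \<psi>"
    and p: "p \<in> pos N" and d: "snd p - fst p = Suc (iota N w (fst p))"
  shows "char_comps N \<psi> p \<noteq> (\<lambda>_. 1)"
proof
  assume triv_p: "char_comps N \<psi> p = (\<lambda>_. 1)"
  have triv_w: "\<forall>q\<in>pos N. snd q - fst q \<le> iota N w (fst q) \<longrightarrow> char_comps N \<psi> q = (\<lambda>_. 1)"
    using largest ut_perm_subset_ker_iff[OF \<psi>] unfolding largest_in_ker_def by blast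
  obtain i j where ij: "p = (i, j)" "1 \<le> i" "i < j" "j \<le> N" using p unfolding pos_def by auto
  have "iota N w i < N - i" using d ij by simp
  then obtain v where v: "v permutes {1..N}" "iota N v i = Suc (iota N w i)"
    "\<forall>k\<in>{1..N}. k \<noteq> i \<longrightarrow> iota N v k = iota N w k"
    using exists_perm_iota_Suc[OF w, of i] ij by auto
  have "\<forall>q\<in>pos N. snd q - fst q \<le> iota N v (fst q) \<longrightarrow> char_comps N \<psi> q = (\<lambda>_. 1)"
  proof (intro ballI impI)
    fix q assume q: "q \<in> pos N" and dq: "snd q - fst q \<le> iota N v (fst q)"
    show "char_comps N \<psi> q = (\<lambda>_. 1)"
    proof (cases "fst q = i \<and> \<not> snd q - fst q \<le> iota N w (fst q)")
      case True
      hence "q = p" using dq v(2) d ij q unfolding pos_def by (cases q) auto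
      thus ?thesis using triv_p by simp
    next
      case False
      moreover have "fst q \<in> {1..N}" using q unfolding pos_def by auto
      ultimately show ?thesis using triv_w v(3) q dq by (metis (no_types, lifting))
    qed
  qed
  hence "ut_perm N v \<subseteq> (ut_perm N w :: 'a mat set)"
    using largest v(1) ut_perm_subset_ker_iff[OF \<psi>] unfolding largest_in_ker_def by blast
  moreover have "elem_mat i j (1::'a) \<in> ut_perm N v"
    unfolding ut_perm_def using elem_mat_in_ut[OF p] ij d v(2) by (auto simp: elem_mat_def)
  moreover have "elem_mat i j (1::'a) \<notin> ut_perm N w"
    unfolding ut_perm_def using ij d by (auto simp: elem_mat_def)
  ultimately show False by blast
qed

lemma largest_in_ker_iff:
  assumes \<psi>: "\<psi> \<in> irr_chars N" and w: "w permutes {1..N}"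
  shows "largest_in_ker N w \<psi> \<longleftrightarrow> char_comps N \<psi> \<in> PiE (pos N) (allowed_comps N w)"
proof -
  let ?A = "\<forall>p\<in>pos N. snd p - fst p \<le> iota N w (fst p) \<longrightarrow> char_comps N \<psi> p = (\<lambda>_. 1)"
  let ?C = "\<forall>p\<in>pos N. snd p - fst p = Suc (iota N w (fst p)) \<longrightarrow> char_comps N \<psi> p \<noteq> (\<lambda>_. 1)"
  have "largest_in_ker N w \<psi> \<longleftrightarrow> ?A \<and> ?C"
  proof
    assume "largest_in_ker N w \<psi>"
    thus "?A \<and> ?C"
      using ut_perm_subset_ker_iff[OF \<psi>] largest_in_ker_boundary_nontrivial[OF \<psi> w]
      unfolding largest_in_ker_def by blast
  next
    assume AC: "?A \<and> ?C"
    have "ut_perm N v \<subseteq> (ut_perm N w :: 'a mat set)"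
      if v: "\<forall>p\<in>pos N. snd p - fst p \<le> iota N v (fst p) \<longrightarrow> char_comps N \<psi> p = (\<lambda>_. 1)" for v
    proof
      fix x :: "'a mat" assume x: "x \<in> ut_perm N v"
      have xu: "x \<in> ut N" using x unfolding ut_perm_def by simp
      have "j - i \<le> iota N w i" if nz: "x i j \<noteq> 0" for i j
      proof (rule ccontr)
        assume gt: "\<not> j - i \<le> iota N w i"
        \<comment> \<open>the boundary position of row \<open>i\<close> lies inside \<open>ut_perm N v\<close>, where the component is trivial\<close>
        have "1 \<le> i" "i < j" "j \<le> N" using xu nz unfolding ut_def by auto
        moreover have "j - i \<le> iota N v i" using x nz unfolding ut_perm_def by auto
        ultimately have "(i, i + Suc (iota N w i)) \<in> pos N"
          "char_comps N \<psi> (i, i + Suc (iota N w i)) = (\<lambda>_. 1)"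
          using v gt unfolding pos_def by auto
        thus False using AC by auto
      qed
      thus "x \<in> ut_perm N w" using x xu unfolding ut_perm_def by auto
    qed
    thus "largest_in_ker N w \<psi>"
      using AC ut_perm_subset_ker_iff[OF \<psi>] unfolding largest_in_ker_def by blast
  qed
  thus ?thesis unfolding char_comps_in_allowed_comps_iff[OF \<psi>] .
qed

lemma supchar_eq_prod_sum:
  assumes w: "w permutes {1..N}"
  shows "supchar N w (x::'a::{finite,field} mat) = (if x \<in> ut N then
     \<Prod>p\<in>pos N. \<Sum>\<chi>\<in>allowed_comps N w p. \<chi> (x (fst p) (snd p)) else 0)"
proof (cases "x \<in> ut N")
  case False
  thus ?thesis unfolding supchar_def by (intro trans[OF sum.neutral]) (auto simp: irr_char_outside)
next
  case True
  let ?S = "{\<psi> \<in> irr_chars N. largest_in_ker N w \<psi>} :: ('a mat \<Rightarrow> complex) set"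
  have "supchar N w x = (\<Sum>L\<in>PiE (pos N) (allowed_comps N w). \<Prod>p\<in>pos N. L p (x (fst p) (snd p)))"
    unfolding supchar_def
  proof (rule sum.reindex_bij_witness[of _ "char_of_comps N" "char_comps N"])
    fix \<psi> assume \<psi>: "\<psi> \<in> ?S"
    show "char_of_comps N (char_comps N \<psi>) = \<psi>" using \<psi> char_of_comps_char_comps by blast
    show "char_comps N \<psi> \<in> PiE (pos N) (allowed_comps N w)" using \<psi> largest_in_ker_iff[OF _ w] by blast
    have "(\<Prod>p\<in>pos N. char_comps N \<psi> p (x (fst p) (snd p))) =
          (\<Prod>p\<in>pos N. \<psi> (elem_mat (fst p) (snd p) (x (fst p) (snd p))))"
      by (rule prod.cong) (simp_all add: char_comps_apply)
    also have "\<dots> = \<psi> x" using irr_char_eq_prod_elem[of \<psi> N x] \<psi> True by simp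
    finally show "(\<Prod>p\<in>pos N. char_comps N \<psi> p (x (fst p) (snd p))) = char_degree \<psi> * \<psi> x"
      using \<psi> irr_char_zero[of \<psi> N] unfolding char_degree_def by simp
  next
    fix L :: "nat \<times> nat \<Rightarrow> 'a \<Rightarrow> complex" assume L: "L \<in> PiE (pos N) (allowed_comps N w)"
    hence L': "L \<in> PiE (pos N) (\<lambda>_. add_chars)"
      using PiE_mono[of "pos N" "allowed_comps N w" "\<lambda>_. add_chars"] allowed_comps_subset by blast
    show "char_comps N (char_of_comps N L) = L" by (rule char_comps_char_of_comps[OF L'])
    show "char_of_comps N L \<in> ?S"
      using char_of_comps_in_irr_chars[OF L'] largest_in_ker_iff[OF char_of_comps_in_irr_chars[OF L'] w]
        char_comps_char_of_comps[OF L'] L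
      by simp
  qed
  also have "\<dots> = (\<Prod>p\<in>pos N. \<Sum>\<chi>\<in>allowed_comps N w p. \<chi> (x (fst p) (snd p)))"
    by (rule prod_sum_PiE[symmetric]) (simp_all add: finite_pos finite_allowed_comps)
  finally show ?thesis using True by simp
qed

text \<open>The factor of \<open>\<chi>\<^sup>w\<close> at a position with \<open>j - i = d\<close> in a row with \<open>\<iota>\<^sub>i(w) = \<iota>\<close>,
  evaluated at the entry \<open>t\<close>.\<close>

definition supchar_factor :: "nat \<Rightarrow> nat \<Rightarrow> 'a::{finite,field} \<Rightarrow> complex" where
  "supchar_factor d \<iota> t = (if d \<le> \<iota> then 1 else if d = Suc \<iota> then
      (if t = 0 then of_nat (card (UNIV::'a set)) - 1 else - 1)
     else (if t = 0 then of_nat (card (UNIV::'a set)) else 0))"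

lemma supchar_eq_prod:
  assumes "w permutes {1..N}"
  shows "supchar N w (x::'a::{finite,field} mat) = (if x \<in> ut N then
     \<Prod>p\<in>pos N. supchar_factor (snd p - fst p) (iota N w (fst p)) (x (fst p) (snd p)) else 0)"
proof -
  have "(\<Sum>\<chi>\<in>allowed_comps N w p. \<chi> t) = supchar_factor (snd p - fst p) (iota N w (fst p)) t"
    for p and t :: 'a
    unfolding allowed_comps_def supchar_factor_def by (simp add: sum_add_chars sum_nontrivial_add_chars)
  thus ?thesis unfolding supchar_eq_prod_sum[OF assms] by simp
qed

section \<open>Counting in a subset and its complement\<close>

text \<open>\<open>compl_above N A i\<close> counts the non-elements of \<open>A\<close> above \<open>i\<close>, so that \<open>c\<^sub>i = i + compl_above N A i\<close>;
  \<open>rank_compl A\<close> and \<open>rank_in A\<close> are the row renumberings behind the identifications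
  \<open>ut_A\<^sup>\<or> \<cong> ut_m\<close> and \<open>ut_A \<cong> ut_n\<close>.\<close>

definition compl_above :: "nat \<Rightarrow> nat set \<Rightarrow> nat \<Rightarrow> nat" where
  "compl_above N A i = card {b \<in> {1..N}. b \<notin> A \<and> i < b}"

definition rank_compl :: "nat set \<Rightarrow> nat \<Rightarrow> nat" where
  "rank_compl A v = v - card {a \<in> A. a < v}"

definition rank_in :: "nat set \<Rightarrow> nat \<Rightarrow> nat" where
  "rank_in A v = v - card {b \<in> {1..<v}. b \<notin> A}"

lemma cA_eq_add_compl_above:
  assumes A: "A \<subseteq> {1..N}" and i: "i \<le> N"
  shows "cA N A i = i + compl_above N A i"
proof -
  have "{b \<in> {1..N}. i < b} = {b \<in> {1..N}. b \<notin> A \<and> i < b} \<union> {a \<in> A. a > i}" using A by auto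
  moreover have "card ({b \<in> {1..N}. b \<notin> A \<and> i < b} \<union> {a \<in> A. a > i}) =
     card {b \<in> {1..N}. b \<notin> A \<and> i < b} + card {a \<in> A. a > i}"
    using finite_subset[OF A] by (intro card_Un_disjoint) auto
  ultimately have "card {b \<in> {1..N}. i < b} = compl_above N A i + card {a \<in> A. a > i}"
    unfolding compl_above_def by simp
  moreover have "{b \<in> {1..N}. i < b} = {Suc i..N}" by auto
  ultimately have "N - i = compl_above N A i + card {a \<in> A. a > i}" by simp
  thus ?thesis unfolding cA_def using i by simp
qed

lemma rank_compl_eq_card:
  assumes A: "A \<subseteq> {1..N}" and v: "v \<notin> A"
  shows "rank_compl A v = card {b \<in> {1..v}. b \<notin> A}"
proof -
  have e: "{1..v} = {b \<in> {1..v}. b \<notin> A} \<union> {a \<in> A. a < v}" using A v by (auto simp: order.order_iff_strict)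
  have "card ({b \<in> {1..v}. b \<notin> A} \<union> {a \<in> A. a < v}) = card {b \<in> {1..v}. b \<notin> A} + card {a \<in> A. a < v}"
    by (intro card_Un_disjoint) auto
  hence "v = card {b \<in> {1..v}. b \<notin> A} + card {a \<in> A. a < v}" using e by (metis card_atLeastAtMost diff_Suc_1)
  thus ?thesis unfolding rank_compl_def by simp
qed

lemma rank_in_eq_card:
  assumes A: "A \<subseteq> {1..N}" and v: "v \<in> A"
  shows "rank_in A v = card {a \<in> A. a \<le> v}"
proof -
  have e: "{1..v} = {b \<in> {1..<v}. b \<notin> A} \<union> {a \<in> A. a \<le> v}" using A v by (auto simp: le_less)
  have "card ({b \<in> {1..<v}. b \<notin> A} \<union> {a \<in> A. a \<le> v}) = card {b \<in> {1..<v}. b \<notin> A} + card {a \<in> A. a \<le> v}"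
    by (intro card_Un_disjoint) auto
  hence "v = card {b \<in> {1..<v}. b \<notin> A} + card {a \<in> A. a \<le> v}" using e by (metis card_atLeastAtMost diff_Suc_1)
  thus ?thesis unfolding rank_in_def by simp
qed

lemma rank_compl_strict_mono:
  assumes A: "A \<subseteq> {1..N}" and u: "u \<notin> A" and v: "v \<notin> A" and uv: "u < v" and u1: "1 \<le> u"
  shows "rank_compl A u < rank_compl A v"
proof -
  have "v \<in> {b \<in> {1..v}. b \<notin> A}" "v \<notin> {b \<in> {1..u}. b \<notin> A}" using uv v u1 by auto
  moreover have "{b \<in> {1..u}. b \<notin> A} \<subseteq> {b \<in> {1..v}. b \<notin> A}" using uv by auto
  ultimately have "{b \<in> {1..u}. b \<notin> A} \<subset> {b \<in> {1..v}. b \<notin> A}" by blast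
  hence "card {b \<in> {1..u}. b \<notin> A} < card {b \<in> {1..v}. b \<notin> A}" by (intro psubset_card_mono) auto
  thus ?thesis using rank_compl_eq_card[OF A u] rank_compl_eq_card[OF A v] by simp
qed

lemma rank_in_strict_mono:
  assumes A: "A \<subseteq> {1..N}" and u: "u \<in> A" and v: "v \<in> A" and uv: "u < v"
  shows "rank_in A u < rank_in A v"
proof -
  have "v \<in> {a \<in> A. a \<le> v}" "v \<notin> {a \<in> A. a \<le> u}" using uv v by auto
  moreover have "{a \<in> A. a \<le> u} \<subseteq> {a \<in> A. a \<le> v}" using uv by auto
  ultimately have "{a \<in> A. a \<le> u} \<subset> {a \<in> A. a \<le> v}" by blast
  moreover have "finite {a \<in> A. a \<le> v}" by simp
  ultimately have "card {a \<in> A. a \<le> u} < card {a \<in> A. a \<le> v}" by (intro psubset_card_mono) auto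
  thus ?thesis using rank_in_eq_card[OF A u] rank_in_eq_card[OF A v] by simp
qed

lemma rank_compl_less_iff:
  assumes A: "A \<subseteq> {1..N}" and u: "u \<notin> A" "1 \<le> u" and v: "v \<notin> A" "1 \<le> v"
  shows "rank_compl A u < rank_compl A v \<longleftrightarrow> u < v"
  using rank_compl_strict_mono[OF A u(1) v(1) _ u(2)] rank_compl_strict_mono[OF A v(1) u(1) _ v(2)]
  by (metis less_asym linorder_neqE_nat)

lemma rank_in_less_iff:
  assumes A: "A \<subseteq> {1..N}" and u: "u \<in> A" and v: "v \<in> A"
  shows "rank_in A u < rank_in A v \<longleftrightarrow> u < v"
  using rank_in_strict_mono[OF A u v] rank_in_strict_mono[OF A v u] by (metis less_asym linorder_neqE_nat)

lemma card_compl_atLeastAtMost: "A \<subseteq> {1..N} \<Longrightarrow> card ({1..N} - A) = N - card A"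
  by (simp add: card_Diff_subset finite_subset)

lemma bij_betw_rank_compl:
  assumes A: "A \<subseteq> {1..N}"
  shows "bij_betw (rank_compl A) ({1..N} - A) {1..N - card A}"
proof -
  have inj: "inj_on (rank_compl A) ({1..N} - A)"
  proof (rule inj_onI)
    fix x y assume x: "x \<in> {1..N} - A" and y: "y \<in> {1..N} - A" and e: "rank_compl A x = rank_compl A y"
    show "x = y"
    proof (rule linorder_cases[of x y])
      assume "x < y" thus ?thesis using rank_compl_strict_mono[OF A, of x y] x y e by auto
    next
      assume "y < x" thus ?thesis using rank_compl_strict_mono[OF A, of y x] x y e by auto
    qed
  qed
  have sub: "rank_compl A ` ({1..N} - A) \<subseteq> {1..N - card A}"
  proof
    fix y assume "y \<in> rank_compl A ` ({1..N} - A)"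
    then obtain v where v: "v \<in> {1..N} - A" "y = rank_compl A v" by blast
    have y: "y = card {b \<in> {1..v}. b \<notin> A}" using rank_compl_eq_card[OF A] v by simp
    have "v \<in> {b \<in> {1..v}. b \<notin> A}" using v by auto
    hence "0 < y" unfolding y by (subst card_gt_0_iff) auto
    hence "1 \<le> y" by simp
    moreover have "y \<le> card ({1..N} - A)" unfolding y using v by (intro card_mono) auto
    ultimately show "y \<in> {1..N - card A}" using card_compl_atLeastAtMost[OF A] by simp
  qed
  have "card (rank_compl A ` ({1..N} - A)) = card {1..N - card A}"
    using card_image[OF inj] card_compl_atLeastAtMost[OF A] by simp
  hence "rank_compl A ` ({1..N} - A) = {1..N - card A}" using sub by (intro card_subset_eq) auto
  thus ?thesis using inj unfolding bij_betw_def by blast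
qed

lemma bij_betw_rank_in:
  assumes A: "A \<subseteq> {1..N}"
  shows "bij_betw (rank_in A) A {1..card A}"
proof -
  have fA: "finite A" using A finite_subset by blast
  have inj: "inj_on (rank_in A) A"
  proof (rule inj_onI)
    fix x y assume x: "x \<in> A" and y: "y \<in> A" and e: "rank_in A x = rank_in A y"
    show "x = y"
    proof (rule linorder_cases[of x y])
      assume "x < y" thus ?thesis using rank_in_strict_mono[OF A, of x y] x y e by auto
    next
      assume "y < x" thus ?thesis using rank_in_strict_mono[OF A, of y x] x y e by auto
    qed
  qed
  have sub: "rank_in A ` A \<subseteq> {1..card A}"
  proof
    fix y assume "y \<in> rank_in A ` A"
    then obtain v where v: "v \<in> A" "y = rank_in A v" by blast
    have y: "y = card {a \<in> A. a \<le> v}" using rank_in_eq_card[OF A] v by simp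
    have "v \<in> {a \<in> A. a \<le> v}" using v by auto
    hence "0 < y" unfolding y using fA by (subst card_gt_0_iff) auto
    hence "1 \<le> y" by simp
    moreover have "y \<le> card A" unfolding y using fA by (intro card_mono) auto
    ultimately show "y \<in> {1..card A}" by simp
  qed
  have "card (rank_in A ` A) = card {1..card A}" using card_image[OF inj] by simp
  hence "rank_in A ` A = {1..card A}" using sub by (intro card_subset_eq) auto
  thus ?thesis using inj unfolding bij_betw_def by blast
qed

lemma compl_above_eq_card_perm:
  assumes w: "w permutes {1..N}"
  shows "compl_above N A v = card {r \<in> {1..N}. w r \<notin> A \<and> v < w r}"
proof -
  have "w ` {r \<in> {1..N}. w r \<notin> A \<and> v < w r} = {b \<in> {1..N}. b \<notin> A \<and> v < b}"
  proof
    show "w ` {r \<in> {1..N}. w r \<notin> A \<and> v < w r} \<subseteq> {b \<in> {1..N}. b \<notin> A \<and> v < b}"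
      using permutes_in_image[OF w] by auto
    show "{b \<in> {1..N}. b \<notin> A \<and> v < b} \<subseteq> w ` {r \<in> {1..N}. w r \<notin> A \<and> v < w r}"
    proof
      fix b assume b: "b \<in> {b \<in> {1..N}. b \<notin> A \<and> v < b}"
      hence "inv w b \<in> {r \<in> {1..N}. w r \<notin> A \<and> v < w r}" "w (inv w b) = b" using permutes_inv_in[OF w, of b] by auto
      thus "b \<in> w ` {r \<in> {1..N}. w r \<notin> A \<and> v < w r}" by (intro rev_image_eqI[of "inv w b"]) simp_all
    qed
  qed
  moreover have "card (w ` {r \<in> {1..N}. w r \<notin> A \<and> v < w r}) = card {r \<in> {1..N}. w r \<notin> A \<and> v < w r}"
    by (rule card_image, rule inj_on_subset[OF permutes_inj[OF w]]) simp
  ultimately show ?thesis unfolding compl_above_def by simp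
qed

lemma upward_closed_eq_tail:
  assumes P: "P \<subseteq> {1..m + n}" and c: "card P = n"
    and up: "\<And>s t. s \<in> P \<Longrightarrow> t \<in> {1..m + n} \<Longrightarrow> s < t \<Longrightarrow> t \<in> P"
  shows "P = {m + 1..m + n}"
proof (cases "P = {}")
  case True
  hence "n = 0" using c by simp
  thus ?thesis using True by simp
next
  case False
  have fP: "finite P" using P finite_subset by blast
  define s0 where "s0 = Min P"
  have s0: "s0 \<in> P" unfolding s0_def using fP False by (rule Min_in)
  have s0le: "\<And>s. s \<in> P \<Longrightarrow> s0 \<le> s" unfolding s0_def using fP by simp
  have "P = {s0..m + n}"
  proof
    show "P \<subseteq> {s0..m + n}" using s0le P by auto
    show "{s0..m + n} \<subseteq> P"
    proof
      fix t assume t: "t \<in> {s0..m + n}"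
      show "t \<in> P"
      proof (cases "t = s0")
        case True thus ?thesis using s0 by simp
      next
        case False
        hence "s0 < t" using t by auto
        moreover have "t \<in> {1..m+n}" using t s0 P by auto
        ultimately show ?thesis using up[OF s0] by blast
      qed
    qed
  qed
  note Pe = this
  hence "card {s0..m+n} = n" using c by simp
  moreover have "s0 \<le> m + n" using s0 P by auto
  ultimately have "s0 = m + 1" by simp
  thus ?thesis using Pe by simp
qed

section \<open>Permutations mapping the last \<open>n\<close> positions onto \<open>A\<close>\<close>

locale delapse_data =
  fixes m n :: nat and A :: "nat set" and w :: "nat \<Rightarrow> nat"
  assumes A: "A \<subseteq> {1..m+n}" and card_A: "card A = n" and w: "w permutes {1..m+n}"
begin

abbreviation N :: nat where "N \<equiv> m + n"

lemma inj_on_w: "inj_on w X"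
  by (rule inj_on_subset[OF permutes_inj[OF w]]) simp

lemma card_preimage_A: "card {s \<in> {1..N}. w s \<in> A} = n"
proof -
  have "w ` {s \<in> {1..N}. w s \<in> A} = A"
  proof
    show "w ` {s \<in> {1..N}. w s \<in> A} \<subseteq> A" by auto
    show "A \<subseteq> w ` {s \<in> {1..N}. w s \<in> A}"
    proof
      fix a assume a: "a \<in> A"
      hence "a \<in> {1..N}" using A by auto
      hence "inv w a \<in> {s \<in> {1..N}. w s \<in> A}" "w (inv w a) = a" using permutes_inv_in[OF w] a by auto
      thus "a \<in> w ` {s \<in> {1..N}. w s \<in> A}" by (intro rev_image_eqI[of "inv w a"]) simp_all
    qed
  qed
  hence "card (w ` {s \<in> {1..N}. w s \<in> A}) = n" using card_A by simp
  thus ?thesis using card_image[OF inj_on_w] by simp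
qed

definition tail_to_A :: bool where "tail_to_A \<longleftrightarrow> {s \<in> {1..N}. w s \<in> A} = {m+1..N}"

lemma tail_to_A_iff:
  assumes H: tail_to_A and s: "s \<in> {1..N}" shows "w s \<in> A \<longleftrightarrow> m < s"
proof -
  have e: "{s \<in> {1..N}. w s \<in> A} = {m+1..N}" using H unfolding tail_to_A_def .
  have "(s \<in> {s \<in> {1..N}. w s \<in> A}) = (s \<in> {m+1..N})" by (simp only: e)
  thus ?thesis using s by auto
qed

lemma compl_above_eq_card_head: "tail_to_A \<Longrightarrow> compl_above N A v = card {r \<in> {1..m}. v < w r}"
proof -
  assume H: tail_to_A
  have "{r \<in> {1..N}. w r \<notin> A \<and> v < w r} = {r \<in> {1..m}. v < w r}"
    using tail_to_A_iff[OF H] by auto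
  thus ?thesis using compl_above_eq_card_perm[OF w] by simp
qed

lemma compl_above_le_iota: "tail_to_A \<Longrightarrow> i \<in> A \<Longrightarrow> compl_above N A i \<le> iota N w i"
proof -
  assume H: tail_to_A and i: "i \<in> A"
  have iN: "i \<in> {1..N}" using i A by auto
  have s: "inv w i \<in> {1..N}" "w (inv w i) = i" using permutes_inv_in[OF w iN] by auto
  hence "m < inv w i" using tail_to_A_iff[OF H s(1)] i by simp
  hence "{r \<in> {1..m}. i < w r} \<subseteq> {r \<in> {1..N}. r < inv w i \<and> i < w r}" by auto
  hence "card {r \<in> {1..m}. i < w r} \<le> iota N w i" unfolding iota_def by (intro card_mono) auto
  thus ?thesis using compl_above_eq_card_head[OF H] by simp
qed

lemma iota_le_compl_above: "tail_to_A \<Longrightarrow> i \<in> {1..N} - A \<Longrightarrow> iota N w i \<le> compl_above N A i"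
proof -
  assume H: tail_to_A and i: "i \<in> {1..N} - A"
  have s: "inv w i \<in> {1..N}" "w (inv w i) = i" using permutes_inv_in[OF w] i by auto
  hence "\<not> m < inv w i" using tail_to_A_iff[OF H s(1)] i by simp
  hence "{r \<in> {1..N}. r < inv w i \<and> i < w r} \<subseteq> {r \<in> {1..m}. i < w r}" by auto
  hence "iota N w i \<le> card {r \<in> {1..m}. i < w r}" unfolding iota_def by (intro card_mono) auto
  thus ?thesis using compl_above_eq_card_head[OF H] by simp
qed

lemma exists_A_value_before_compl_value:
  assumes "\<not> tail_to_A"
  shows "\<exists>s t. s \<in> {1..N} \<and> t \<in> {1..N} \<and> s < t \<and> w s \<in> A \<and> w t \<notin> A"
proof (rule ccontr)
  assume ne: "\<not> (\<exists>s t. s \<in> {1..N} \<and> t \<in> {1..N} \<and> s < t \<and> w s \<in> A \<and> w t \<notin> A)"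
  have "{s \<in> {1..N}. w s \<in> A} = {m+1..N}"
  proof (rule upward_closed_eq_tail[OF _ card_preimage_A])
    show "{s \<in> {1..N}. w s \<in> A} \<subseteq> {1..N}" by auto
    fix s t assume "s \<in> {s \<in> {1..N}. w s \<in> A}" "t \<in> {1..N}" "s < t"
    thus "t \<in> {s \<in> {1..N}. w s \<in> A}" using ne by blast
  qed
  thus False using assms unfolding tail_to_A_def by simp
qed

text \<open>Let \<open>tb\<close> be the last position carrying a value \<open>b \<notin> A\<close>. Every value \<open>> b\<close> outside \<open>A\<close>
  then sits left of \<open>tb\<close>, so \<open>compl_above N A b \<le> iota N w b\<close>; under the reverse inequality the
  two inversion sets coincide, so no value in \<open>A\<close> left of \<open>tb\<close> can exceed \<open>b\<close>.\<close>

lemma A_values_below_last_compl_value: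
  assumes bound: "iota N w (w tb) \<le> compl_above N A (w tb)"
    and tb: "tb \<in> {1..N}" "w tb \<notin> A" and last: "\<And>r. r \<in> {1..N} \<Longrightarrow> w r \<notin> A \<Longrightarrow> r \<le> tb"
    and r: "r \<in> {1..N}" "r < tb" "w r \<in> A"
  shows "w r \<le> w tb"
proof (rule ccontr)
  assume "\<not> w r \<le> w tb"
  define X where "X = {r \<in> {1..N}. r < tb \<and> w tb < w r}"
  define B where "B = {r \<in> {1..N}. w r \<notin> A \<and> w tb < w r}"
  have "iota N w (w tb) = card X" unfolding iota_def X_def permutes_inverses(2)[OF w] ..
  moreover have "compl_above N A (w tb) = card B" unfolding B_def by (rule compl_above_eq_card_perm[OF w])
  ultimately have "card X \<le> card B" using bound by simp
  have "B \<subseteq> X"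
  proof
    fix r assume r: "r \<in> B"
    hence "r \<le> tb" "r \<noteq> tb" using last unfolding B_def by auto
    thus "r \<in> X" using r unfolding X_def B_def by auto
  qed
  moreover have "card B \<le> card X" using \<open>B \<subseteq> X\<close> by (intro card_mono) (auto simp: X_def)
  ultimately have "B = X" using \<open>card X \<le> card B\<close> by (intro card_subset_eq) (auto simp: X_def)
  moreover have "r \<in> X" using r \<open>\<not> w r \<le> w tb\<close> unfolding X_def by auto
  ultimately show False using r unfolding B_def by auto
qed

text \<open>If \<open>a = w sa\<close> is the largest value in \<open>A\<close> left of \<open>tb\<close>, all values larger than \<open>a\<close> left
  of \<open>sa\<close> lie outside \<open>A\<close>, and \<open>tb\<close> contributes one more value \<open>> a\<close> outside \<open>A\<close>.\<close>

lemma iota_less_compl_above_at_max_A_value: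
  assumes sa: "sa \<in> {1..N}" "sa < tb" and tb: "tb \<in> {1..N}" "w tb \<notin> A" "w sa < w tb"
    and amax: "\<And>r. r \<in> {1..N} \<Longrightarrow> r < tb \<Longrightarrow> w r \<in> A \<Longrightarrow> w r \<le> w sa"
  shows "iota N w (w sa) < compl_above N A (w sa)"
proof -
  define Y where "Y = {r \<in> {1..N}. r < sa \<and> w sa < w r}"
  define B where "B = {r \<in> {1..N}. w r \<notin> A \<and> w sa < w r}"
  have iota_a: "iota N w (w sa) = card Y" unfolding iota_def Y_def permutes_inverses(2)[OF w] ..
  have compl_a: "compl_above N A (w sa) = card B" unfolding B_def by (rule compl_above_eq_card_perm[OF w])
  have "Y \<subseteq> B - {tb}"
  proof
    fix r assume r: "r \<in> Y"
    have "w r \<notin> A"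
    proof
      assume "w r \<in> A"
      hence "w r \<le> w sa" using r sa amax unfolding Y_def by auto
      thus False using r unfolding Y_def by simp
    qed
    thus "r \<in> B - {tb}" using r sa unfolding Y_def B_def by auto
  qed
  hence "card Y \<le> card (B - {tb})" by (intro card_mono) (auto simp: B_def)
  moreover have "tb \<in> B" using tb unfolding B_def by auto
  hence "card (B - {tb}) < card B" by (intro card_Diff1_less) (auto simp: B_def)
  ultimately show ?thesis using iota_a compl_a by simp
qed

lemma tail_to_A_if_bounds:
  assumes bound_A: "\<forall>i\<in>A. compl_above N A i \<le> iota N w i"
      and bound_compl: "\<forall>i\<in>{1..N} - A. iota N w i \<le> compl_above N A i"
  shows tail_to_A
proof (rule ccontr)
  assume "\<not> tail_to_A"
  then obtain s t where st: "s \<in> {1..N}" "t \<in> {1..N}" "s < t" "w s \<in> A" "w t \<notin> A"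
    using exists_A_value_before_compl_value by blast
  define tb where "tb = Max {r \<in> {1..N}. w r \<notin> A}"
  have "tb \<in> {r \<in> {1..N}. w r \<notin> A}" unfolding tb_def using st by (intro Max_in) auto
  hence tb: "tb \<in> {1..N}" "w tb \<notin> A" by auto
  have last: "r \<le> tb" if "r \<in> {1..N}" "w r \<notin> A" for r
    unfolding tb_def using that by (intro Max_ge) auto
  have "w tb \<in> {1..N} - A" using tb permutes_in_image[OF w] by auto
  hence "iota N w (w tb) \<le> compl_above N A (w tb)" using bound_compl by blast
  hence below: "w r \<le> w tb" if "r \<in> {1..N}" "r < tb" "w r \<in> A" for r
    using A_values_below_last_compl_value[OF _ tb last that] by blast
  define SA where "SA = {r \<in> {1..N}. r < tb \<and> w r \<in> A}"
  have "s \<in> SA" using st last[OF st(2,5)] unfolding SA_def by auto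
  have fin: "finite (w ` SA)" unfolding SA_def by simp
  have "Max (w ` SA) \<in> w ` SA" using fin \<open>s \<in> SA\<close> by (intro Max_in) auto
  then obtain sa where sa: "sa \<in> SA" "w sa = Max (w ` SA)" by (metis imageE)
  have amax: "w r \<le> w sa" if "r \<in> SA" for r using fin that sa(2) by simp
  have "w sa \<noteq> w tb" using sa(1) tb(2) unfolding SA_def by auto
  hence "w sa < w tb" using below sa(1) unfolding SA_def by force
  hence "iota N w (w sa) < compl_above N A (w sa)"
    using iota_less_compl_above_at_max_A_value[OF _ _ tb] sa(1) amax unfolding SA_def by auto
  thus False using bound_A sa(1) unfolding SA_def by force
qed

lemma image_head: "tail_to_A \<Longrightarrow> w ` {1..m} = {1..N} - A"
proof -
  assume H: tail_to_A
  show ?thesis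
  proof
    show "w ` {1..m} \<subseteq> {1..N} - A"
    proof
      fix y assume "y \<in> w ` {1..m}"
      then obtain r where r: "r \<in> {1..m}" "y = w r" by blast
      hence "r \<in> {1..N}" by auto
      thus "y \<in> {1..N} - A" using tail_to_A_iff[OF H] permutes_in_image[OF w] r by auto
    qed
    show "{1..N} - A \<subseteq> w ` {1..m}"
    proof
      fix b assume b: "b \<in> {1..N} - A"
      hence r: "inv w b \<in> {1..N}" "w (inv w b) = b" using permutes_inv_in[OF w] by auto
      hence "inv w b \<in> {1..m}" using tail_to_A_iff[OF H r(1)] b by auto
      thus "b \<in> w ` {1..m}" using r(2) by (intro rev_image_eqI[of "inv w b"]) simp_all
    qed
  qed
qed

lemma image_tail: "tail_to_A \<Longrightarrow> w ` {m+1..N} = A"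
proof -
  assume H: tail_to_A
  show ?thesis
  proof
    show "w ` {m+1..N} \<subseteq> A"
    proof
      fix y assume "y \<in> w ` {m+1..N}"
      then obtain r where r: "r \<in> {m+1..N}" "y = w r" by blast
      hence "r \<in> {1..N}" by auto
      thus "y \<in> A" using tail_to_A_iff[OF H] r by auto
    qed
    show "A \<subseteq> w ` {m+1..N}"
    proof
      fix b assume b: "b \<in> A"
      hence "b \<in> {1..N}" using A by auto
      hence r: "inv w b \<in> {1..N}" "w (inv w b) = b" using permutes_inv_in[OF w] by auto
      hence "inv w b \<in> {m+1..N}" using tail_to_A_iff[OF H r(1)] b by auto
      thus "b \<in> w ` {m+1..N}" using r(2) by (intro rev_image_eqI[of "inv w b"]) simp_all
    qed
  qed
qed

lemma std_le_eq_rank_compl: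
  assumes H: tail_to_A and i: "i \<in> {1..m}"
  shows "std_le m n w i = rank_compl A (w i)"
proof -
  have "w ` {j \<in> {m+1..N}. w j < w i} = {a \<in> A. a < w i}"
    using image_tail[OF H] by blast
  hence "card {j \<in> {m+1..N}. w j < w i} = card {a \<in> A. a < w i}"
    using card_image[OF inj_on_w, of "{j \<in> {m+1..N}. w j < w i}"] by simp
  thus ?thesis unfolding std_le_def rank_compl_def using i by simp
qed

lemma std_le_permutes:
  assumes H: tail_to_A
  shows "std_le m n w permutes {1..m}"
proof (rule bij_imp_permutes)
  have b1: "bij_betw w {1..m} ({1..N} - A)" using image_head[OF H] inj_on_w unfolding bij_betw_def by blast
  have "bij_betw (rank_compl A \<circ> w) {1..m} {1..m}"
    using bij_betw_trans[OF b1 bij_betw_rank_compl[OF A]] card_A by simp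
  thus "bij_betw (std_le m n w) {1..m} {1..m}"
    by (rule bij_betw_cong[THEN iffD1, rotated]) (simp add: std_le_eq_rank_compl[OF H])
  show "\<And>x. x \<notin> {1..m} \<Longrightarrow> std_le m n w x = x" by (simp add: std_le_def del: atLeastAtMost_iff)
qed

lemma iota_std_le:
  assumes H: tail_to_A and i: "i \<in> {1..N} - A"
  shows "iota m (std_le m n w) (rank_compl A i) = iota N w i"
proof -
  let ?w1 = "std_le m n w"
  define s where "s = inv w i"
  have s: "s \<in> {1..N}" "w s = i" using permutes_inv_in[OF w] i unfolding s_def by auto
  hence sm: "s \<in> {1..m}" using tail_to_A_iff[OF H s(1)] i by auto
  have "?w1 s = rank_compl A i" using std_le_eq_rank_compl[OF H sm] s by simp
  hence inv1: "inv ?w1 (rank_compl A i) = s" by (rule permutes_inv_eq[OF std_le_permutes[OF H], THEN iffD2])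
  have "{r \<in> {1..m}. r < s \<and> rank_compl A i < ?w1 r} = {r \<in> {1..N}. r < s \<and> i < w r}"
  proof (intro set_eqI iffI)
    fix r assume r: "r \<in> {r \<in> {1..m}. r < s \<and> rank_compl A i < ?w1 r}"
    hence rm: "r \<in> {1..m}" by simp
    hence "w r \<in> {1..N} - A" using image_head[OF H] by blast
    hence "i < w r" using r std_le_eq_rank_compl[OF H rm] rank_compl_less_iff[OF A, of i "w r"] i by auto
    thus "r \<in> {r \<in> {1..N}. r < s \<and> i < w r}" using r by auto
  next
    fix r assume r: "r \<in> {r \<in> {1..N}. r < s \<and> i < w r}"
    hence rm: "r \<in> {1..m}" using sm by auto
    hence "w r \<in> {1..N} - A" using image_head[OF H] by blast
    hence "rank_compl A i < ?w1 r" using r std_le_eq_rank_compl[OF H rm] rank_compl_less_iff[OF A, of i "w r"] i by auto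
    thus "r \<in> {r \<in> {1..m}. r < s \<and> rank_compl A i < ?w1 r}" using r rm by auto
  qed
  thus ?thesis unfolding iota_def inv1 s_def[symmetric] by simp
qed

lemma std_gt_eq_rank_in:
  assumes H: tail_to_A and j: "j \<in> {1..n}"
  shows "std_gt m n w j = rank_in A (w (j + m))"
proof -
  have jm: "j + m \<in> {1..N}" using j by auto
  hence v: "w (j + m) \<in> {1..N}" by (rule permutes_in_image[OF w, THEN iffD2])
  have "w ` {i \<in> {1..m}. w i < w (j + m)} = {b \<in> {1..<w (j + m)}. b \<notin> A}"
  proof
    show "w ` {i \<in> {1..m}. w i < w (j + m)} \<subseteq> {b \<in> {1..<w (j + m)}. b \<notin> A}"
      using image_head[OF H] by auto
    show "{b \<in> {1..<w (j + m)}. b \<notin> A} \<subseteq> w ` {i \<in> {1..m}. w i < w (j + m)}"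
    proof
      fix b assume b: "b \<in> {b \<in> {1..<w (j + m)}. b \<notin> A}"
      hence "b \<in> {1..N} - A" using v by auto
      then obtain i where i: "i \<in> {1..m}" "b = w i" using image_head[OF H] by (metis imageE)
      thus "b \<in> w ` {i \<in> {1..m}. w i < w (j + m)}" using b by auto
    qed
  qed
  hence "card {i \<in> {1..m}. w i < w (j + m)} = card {b \<in> {1..<w (j + m)}. b \<notin> A}"
    using card_image[OF inj_on_w, of "{i \<in> {1..m}. w i < w (j + m)}"] by simp
  thus ?thesis unfolding std_gt_def rank_in_def using j by simp
qed

lemma std_gt_permutes:
  assumes H: tail_to_A
  shows "std_gt m n w permutes {1..n}"
proof (rule bij_imp_permutes)
  have b0: "bij_betw (\<lambda>j. j + m) {1..n} {m+1..N}"
    unfolding bij_betw_def by (auto simp: inj_on_def add.commute)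
  have b1: "bij_betw w {m+1..N} A" using image_tail[OF H] inj_on_w unfolding bij_betw_def by blast
  have "bij_betw (rank_in A \<circ> w \<circ> (\<lambda>j. j + m)) {1..n} {1..n}"
    using bij_betw_trans[OF bij_betw_trans[OF b0 b1] bij_betw_rank_in[OF A]] card_A by (simp add: o_assoc)
  thus "bij_betw (std_gt m n w) {1..n} {1..n}"
    by (rule bij_betw_cong[THEN iffD1, rotated]) (simp add: std_gt_eq_rank_in[OF H])
  show "\<And>x. x \<notin> {1..n} \<Longrightarrow> std_gt m n w x = x" by (simp add: std_gt_def del: atLeastAtMost_iff)
qed

lemma iota_std_gt_eq_card_tail:
  assumes H: tail_to_A and a: "a \<in> A"
  shows "iota n (std_gt m n w) (rank_in A a) = card {r \<in> {m+1..N}. r < inv w a \<and> a < w r}"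
proof -
  let ?w2 = "std_gt m n w"
  define s where "s = inv w a"
  have aN: "a \<in> {1..N}" using a A by auto
  have s: "s \<in> {1..N}" "w s = a" using permutes_inv_in[OF w aN] unfolding s_def by auto
  hence ms: "m < s" using tail_to_A_iff[OF H s(1)] a by auto
  have sm: "s - m \<in> {1..n}" using s ms by auto
  have "?w2 (s - m) = rank_in A a" using std_gt_eq_rank_in[OF H sm] s ms by simp
  hence inv2: "inv ?w2 (rank_in A a) = s - m" by (rule permutes_inv_eq[OF std_gt_permutes[OF H], THEN iffD2])
  have wA: "w (r + m) \<in> A" if "r \<in> {1..n}" for r using tail_to_A_iff[OF H, of "r + m"] that by auto
  have "{r \<in> {1..n}. r < s - m \<and> rank_in A a < ?w2 r} = {r \<in> {1..n}. r + m < s \<and> a < w (r + m)}"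
  proof (intro set_eqI iffI)
    fix r assume r: "r \<in> {r \<in> {1..n}. r < s - m \<and> rank_in A a < ?w2 r}"
    hence rn: "r \<in> {1..n}" by simp
    thus "r \<in> {r \<in> {1..n}. r + m < s \<and> a < w (r + m)}"
      using r std_gt_eq_rank_in[OF H rn] rank_in_less_iff[OF A a wA[OF rn]] by auto
  next
    fix r assume r: "r \<in> {r \<in> {1..n}. r + m < s \<and> a < w (r + m)}"
    hence rn: "r \<in> {1..n}" by simp
    thus "r \<in> {r \<in> {1..n}. r < s - m \<and> rank_in A a < ?w2 r}"
      using r std_gt_eq_rank_in[OF H rn] rank_in_less_iff[OF A a wA[OF rn]] by auto
  qed
  moreover have "(\<lambda>r. r + m) ` {r \<in> {1..n}. r + m < s \<and> a < w (r + m)} = {r \<in> {m+1..N}. r < s \<and> a < w r}"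
  proof (intro set_eqI iffI)
    fix r assume "r \<in> {r \<in> {m+1..N}. r < s \<and> a < w r}"
    hence "r - m \<in> {r \<in> {1..n}. r + m < s \<and> a < w (r + m)}" "r = r - m + m" by auto
    thus "r \<in> (\<lambda>r. r + m) ` {r \<in> {1..n}. r + m < s \<and> a < w (r + m)}" by (rule rev_image_eqI)
  qed auto
  moreover have "card ((\<lambda>r. r + m) ` {r \<in> {1..n}. r + m < s \<and> a < w (r + m)}) = card {r \<in> {1..n}. r + m < s \<and> a < w (r + m)}"
    by (rule card_image) (simp add: inj_on_def)
  ultimately show ?thesis unfolding iota_def inv2 s_def by simp
qed

lemma iota_eq_compl_above_add_iota_std_gt:
  assumes H: tail_to_A and a: "a \<in> A"
  shows "iota N w a = compl_above N A a + iota n (std_gt m n w) (rank_in A a)"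
proof -
  define s where "s = inv w a"
  have aN: "a \<in> {1..N}" using a A by auto
  have "m < s"
    using tail_to_A_iff[OF H permutes_inv_in(1)[OF w aN]] permutes_inv_in(2)[OF w aN] a
    unfolding s_def by simp
  hence "{r \<in> {1..N}. r < s \<and> a < w r} = {r \<in> {1..m}. a < w r} \<union> {r \<in> {m+1..N}. r < s \<and> a < w r}"
    by auto
  moreover have "card ({r \<in> {1..m}. a < w r} \<union> {r \<in> {m+1..N}. r < s \<and> a < w r}) =
      card {r \<in> {1..m}. a < w r} + card {r \<in> {m+1..N}. r < s \<and> a < w r}"
    by (intro card_Un_disjoint) auto
  ultimately have "iota N w a = card {r \<in> {1..m}. a < w r} + card {r \<in> {m+1..N}. r < s \<and> a < w r}"
    unfolding iota_def s_def[symmetric] by simp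
  thus ?thesis using iota_std_gt_eq_card_tail[OF H a] compl_above_eq_card_head[OF H] unfolding s_def by simp
qed

end

section \<open>Delapsing a supercharacter\<close>

lemma sum_supported_prod:
  fixes h :: "nat \<times> nat \<Rightarrow> 'a::{finite,field} \<Rightarrow> complex"
  assumes P: "P \<subseteq> pos N"
  shows "(\<Sum>y\<in>(supported N P :: ('a::{finite,field}) mat set). \<Prod>p\<in>P. h p (y (fst p) (snd p)))
         = (\<Prod>p\<in>P. \<Sum>t\<in>(UNIV::'a set). h p t)"
proof -
  have fP: "finite P" using finite_subset[OF P finite_pos] .
  have "(\<Sum>y\<in>(supported N P :: 'a mat set). \<Prod>p\<in>P. h p (y (fst p) (snd p)))
        = (\<Sum>f\<in>PiE P (\<lambda>_. UNIV::'a set). \<Prod>p\<in>P. h p (f p))"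
  proof (rule sum.reindex_bij_witness[of _ "\<lambda>f a b. if (a, b) \<in> P then f (a, b) else 0"
                                        "\<lambda>y. restrict (\<lambda>p. y (fst p) (snd p)) P"])
    fix y :: "'a mat" assume y: "y \<in> supported N P"
    show "(\<lambda>a b. if (a, b) \<in> P then restrict (\<lambda>p. y (fst p) (snd p)) P (a, b) else 0) = y"
      using y unfolding supported_def by (auto simp: fun_eq_iff)
    show "restrict (\<lambda>p. y (fst p) (snd p)) P \<in> PiE P (\<lambda>_. UNIV)" by simp
    show "(\<Prod>p\<in>P. h p (restrict (\<lambda>p. y (fst p) (snd p)) P p)) = (\<Prod>p\<in>P. h p (y (fst p) (snd p)))"
      by (rule prod.cong) auto
  next
    fix f :: "nat \<times> nat \<Rightarrow> 'a" assume f: "f \<in> PiE P (\<lambda>_. UNIV)"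
    show "restrict (\<lambda>p. (\<lambda>a b. if (a, b) \<in> P then f (a, b) else 0) (fst p) (snd p)) P = f"
      using f by (auto simp: fun_eq_iff PiE_def extensional_def)
    show "(\<lambda>a b. if (a, b) \<in> P then f (a, b) else 0) \<in> supported N P"
      using P unfolding supported_def ut_def pos_def by auto
  qed
  also have "\<dots> = (\<Prod>p\<in>P. \<Sum>t\<in>(UNIV::'a set). h p t)"
    using prod_sum_PiE[of P "\<lambda>_. UNIV::'a set" h] fP by simp
  finally show ?thesis .
qed

lemma card_field_ge_2: "2 \<le> card (UNIV :: ('a::{finite,field}) set)"
proof -
  have "{0, 1} \<subseteq> (UNIV :: 'a set)" by simp
  hence "card {0, 1::'a} \<le> card (UNIV :: 'a set)" by (intro card_mono) auto
  thus ?thesis by simp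
qed

lemma sum_if_zero:
  "(\<Sum>t\<in>(UNIV::('a::{finite,field}) set). if t = 0 then a else b) = a + (of_nat (card (UNIV::'a set)) - 1) * (b::complex)"
proof -
  have "(\<Sum>t\<in>(UNIV::'a set). if t = 0 then a else b) = a + (\<Sum>t\<in>(UNIV::'a set) - {0}. if t = 0 then a else b)"
    using sum.remove[of "UNIV::'a set" 0 "\<lambda>t. if t = 0 then a else b"] by simp
  also have "(\<Sum>t\<in>(UNIV::'a set) - {0}. if t = 0 then a else b) = (\<Sum>t\<in>(UNIV::'a set) - {0}. b)"
    by (rule sum.cong) auto
  also have "\<dots> = of_nat (card (UNIV::'a set) - 1) * b" by simp
  also have "of_nat (card (UNIV::'a set) - 1) = (of_nat (card (UNIV::'a set)) - 1 :: complex)"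
    using card_field_ge_2[where 'a='a] by (simp add: of_nat_diff)
  finally show ?thesis by simp
qed

lemma sum_supchar_factor:
  "(\<Sum>t\<in>(UNIV::'a::{finite,field} set). supchar_factor d \<iota> t) =
     (if d = Suc \<iota> then 0 else of_nat (card (UNIV::'a set)))"
proof -
  have "(\<Sum>t\<in>(UNIV::'a set). supchar_factor d \<iota> t) =
        (\<Sum>t\<in>(UNIV::'a set). if t = 0 then supchar_factor d \<iota> (0::'a) else supchar_factor d \<iota> (1::'a))"
    by (rule sum.cong) (auto simp: supchar_factor_def)
  also have "\<dots> = supchar_factor d \<iota> (0::'a) + (of_nat (card (UNIV::'a set)) - 1) * supchar_factor d \<iota> (1::'a)"
    by (rule sum_if_zero)
  also have "\<dots> = (if d = Suc \<iota> then 0 else of_nat (card (UNIV::'a set)))"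
    by (simp add: supchar_factor_def algebra_simps)
  finally show ?thesis .
qed

lemma sum_weighted_supchar_factor:
  "(\<Sum>t\<in>(UNIV::'a::{finite,field} set).
      (if t \<noteq> 0 then - 1 / (of_nat (card (UNIV::'a set)) - 1) else 1) * supchar_factor d \<iota> t) =
     (if d \<le> \<iota> then 0 else of_nat (card (UNIV::'a set)))"
proof -
  let ?q = "of_nat (card (UNIV::'a set)) :: complex"
  have q1: "?q - 1 \<noteq> 0" using card_field_ge_2[where 'a='a]
    by (metis (mono_tags) One_nat_def numeral_le_one_iff of_nat_1 of_nat_eq_iff right_minus_eq semiring_norm(69))
  let ?c = "- 1 / (?q - 1)"
  have "(\<Sum>t\<in>(UNIV::'a set). (if t \<noteq> 0 then ?c else 1) * supchar_factor d \<iota> t) =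
        (\<Sum>t\<in>(UNIV::'a set). if t = 0 then supchar_factor d \<iota> (0::'a) else ?c * supchar_factor d \<iota> (1::'a))"
    by (rule sum.cong) (auto simp: supchar_factor_def)
  also have "\<dots> = supchar_factor d \<iota> (0::'a) + (?q - 1) * (?c * supchar_factor d \<iota> (1::'a))" by (rule sum_if_zero)
  also have "(?q - 1) * (?c * supchar_factor d \<iota> (1::'a)) = - supchar_factor d \<iota> (1::'a)" using q1 by (simp add: field_simps)
  finally show ?thesis by (simp add: supchar_factor_def)
qed

lemma prod_if_zero:
  assumes "finite S"
  shows "(\<Prod>p\<in>S. if P p then 0 else (q::'a::comm_semiring_1)) = (if \<exists>p\<in>S. P p then 0 else q ^ card S)"
  using assms by (induction S rule: finite_induct) auto

lemma supchar_factor_shift: "supchar_factor (d + s) (\<iota> + s) t = supchar_factor d \<iota> t"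
  unfolding supchar_factor_def by auto

context delapse_data
begin

abbreviation LA_pos :: "(nat \<times> nat) set" where "LA_pos \<equiv> L_pos N A"
abbreviation RA_pos :: "(nat \<times> nat) set" where "RA_pos \<equiv> R_pos N A"

definition Uvee_pos :: "(nat \<times> nat) set" where
  "Uvee_pos = {(i, j) \<in> pos N. i \<notin> A \<and> j \<le> cA N A i}"

definition UA_pos :: "(nat \<times> nat) set" where
  "UA_pos = {(i, j) \<in> pos N. i \<in> A \<and> cA N A i < j}"

lemma pos_regions_subset: "LA_pos \<subseteq> pos N" "RA_pos \<subseteq> pos N" "Uvee_pos \<subseteq> pos N" "UA_pos \<subseteq> pos N"
  unfolding L_pos_def R_pos_def Uvee_pos_def UA_pos_def by auto

lemma finite_pos_regions: "finite LA_pos" "finite RA_pos" "finite Uvee_pos" "finite UA_pos"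
  using pos_regions_subset finite_subset finite_pos by blast+

lemma pos_regions_cover: "pos N = LA_pos \<union> (RA_pos \<union> (Uvee_pos \<union> UA_pos))"
  unfolding L_pos_def R_pos_def Uvee_pos_def UA_pos_def by auto

lemma pos_regions_disjoint: "LA_pos \<inter> (RA_pos \<union> (Uvee_pos \<union> UA_pos)) = {}" "RA_pos \<inter> (Uvee_pos \<union> UA_pos) = {}" "Uvee_pos \<inter> UA_pos = {}"
  unfolding L_pos_def R_pos_def Uvee_pos_def UA_pos_def by auto

definition factor_w :: "nat \<times> nat \<Rightarrow> 'a::{finite,field} \<Rightarrow> complex" where
  "factor_w p t = supchar_factor (snd p - fst p) (iota N w (fst p)) t"

lemma emb_dual_outside: "p \<notin> Uvee_pos \<Longrightarrow> emb_dual m n A u' (fst p) (snd p) = 0"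
  unfolding emb_dual_def Uvee_pos_def by auto

lemma emb_A_outside: "p \<notin> UA_pos \<Longrightarrow> emb_A m n A u (fst p) (snd p) = 0"
  unfolding emb_A_def UA_pos_def by auto

lemma supported_outside: "y \<in> supported N P \<Longrightarrow> p \<notin> P \<Longrightarrow> y (fst p) (snd p) = 0"
  unfolding supported_def by (cases p) auto

lemma delapse_arg_in_ut:
  fixes u' u :: "'a::{finite,field} mat"
  assumes l: "l \<in> supported N LA_pos" and r: "r \<in> supported N RA_pos"
  shows "madd (madd (madd l (emb_dual m n A u')) (emb_A m n A u)) r \<in> ut N"
proof -
  let ?x = "madd (madd (madd l (emb_dual m n A u')) (emb_A m n A u)) r"
  have "(i, j) \<in> pos N" if "?x i j \<noteq> 0" for i j
  proof -
    have "l i j \<noteq> 0 \<or> emb_dual m n A u' i j \<noteq> 0 \<or> emb_A m n A u i j \<noteq> 0 \<or> r i j \<noteq> 0"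
      using that unfolding madd_def by auto
    hence "(i, j) \<in> LA_pos \<or> (i, j) \<in> Uvee_pos \<or> (i, j) \<in> UA_pos \<or> (i, j) \<in> RA_pos"
      using supported_outside[OF l, of "(i,j)"] supported_outside[OF r, of "(i,j)"]
        emb_dual_outside[of "(i,j)"] emb_A_outside[of "(i,j)"] by auto
    thus ?thesis using pos_regions_subset by blast
  qed
  thus ?thesis unfolding ut_def pos_def by auto
qed

lemma supchar_region_prod:
  fixes u' u :: "'a::{finite,field} mat"
  assumes l: "l \<in> supported N LA_pos" and r: "r \<in> supported N RA_pos"
  defines "x \<equiv> madd (madd (madd l (emb_dual m n A u')) (emb_A m n A u)) r"
  shows "supchar N w x = (\<Prod>p\<in>LA_pos. factor_w p (l (fst p) (snd p))) * (\<Prod>p\<in>RA_pos. factor_w p (r (fst p) (snd p))) *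
           ((\<Prod>p\<in>Uvee_pos. factor_w p (emb_dual m n A u' (fst p) (snd p))) * (\<Prod>p\<in>UA_pos. factor_w p (emb_A m n A u (fst p) (snd p))))"
proof -
  let ?E' = "emb_dual m n A u'" and ?E = "emb_A m n A u"
  have xv: "x i j = l i j + ?E' i j + ?E i j + r i j" for i j unfolding x_def madd_def by simp
  have xL: "x (fst p) (snd p) = l (fst p) (snd p)" if "p \<in> LA_pos" for p
  proof -
    have "p \<notin> RA_pos" "p \<notin> Uvee_pos" "p \<notin> UA_pos" using that pos_regions_disjoint by blast+
    thus ?thesis using supported_outside[OF r, of p] emb_dual_outside[of p u'] emb_A_outside[of p u] xv by simp
  qed
  have xR: "x (fst p) (snd p) = r (fst p) (snd p)" if "p \<in> RA_pos" for p
  proof -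
    have "p \<notin> LA_pos" "p \<notin> Uvee_pos" "p \<notin> UA_pos" using that pos_regions_disjoint by blast+
    thus ?thesis using supported_outside[OF l, of p] emb_dual_outside[of p u'] emb_A_outside[of p u] xv by simp
  qed
  have xV: "x (fst p) (snd p) = ?E' (fst p) (snd p)" if "p \<in> Uvee_pos" for p
  proof -
    have "p \<notin> LA_pos" "p \<notin> RA_pos" "p \<notin> UA_pos" using that pos_regions_disjoint by blast+
    thus ?thesis using supported_outside[OF l, of p] supported_outside[OF r, of p] emb_A_outside[of p u] xv by simp
  qed
  have xU: "x (fst p) (snd p) = ?E (fst p) (snd p)" if "p \<in> UA_pos" for p
  proof -
    have "p \<notin> LA_pos" "p \<notin> RA_pos" "p \<notin> Uvee_pos" using that pos_regions_disjoint by blast+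
    thus ?thesis using supported_outside[OF l, of p] supported_outside[OF r, of p] emb_dual_outside[of p u'] xv by simp
  qed
  have "supchar N w x = (\<Prod>p\<in>pos N. factor_w p (x (fst p) (snd p)))"
    using supchar_eq_prod[OF w, of x] delapse_arg_in_ut[OF l r] unfolding factor_w_def x_def by simp
  also have "\<dots> = (\<Prod>p\<in>LA_pos. factor_w p (x (fst p) (snd p))) * ((\<Prod>p\<in>RA_pos. factor_w p (x (fst p) (snd p))) *
      ((\<Prod>p\<in>Uvee_pos. factor_w p (x (fst p) (snd p))) * (\<Prod>p\<in>UA_pos. factor_w p (x (fst p) (snd p)))))"
    unfolding pos_regions_cover using finite_pos_regions pos_regions_disjoint by (simp add: prod.union_disjoint)
  also have "\<dots> = (\<Prod>p\<in>LA_pos. factor_w p (l (fst p) (snd p))) * ((\<Prod>p\<in>RA_pos. factor_w p (r (fst p) (snd p))) *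
      ((\<Prod>p\<in>Uvee_pos. factor_w p (?E' (fst p) (snd p))) * (\<Prod>p\<in>UA_pos. factor_w p (?E (fst p) (snd p)))))"
    using xL xR xV xU by simp
  finally show ?thesis by (simp add: mult.assoc)
qed

definition L_obstructed :: bool where
  "L_obstructed \<longleftrightarrow> (\<exists>p\<in>LA_pos. snd p - fst p = Suc (iota N w (fst p)))"

definition R_obstructed :: bool where
  "R_obstructed \<longleftrightarrow> (\<exists>p\<in>RA_pos. snd p - fst p \<le> iota N w (fst p))"

lemma pow_card_nonzero_eq_prod:
  assumes r: "r \<in> supported N RA_pos"
  shows "c ^ card {(i, j). r i j \<noteq> 0} = (\<Prod>p\<in>RA_pos. if r (fst p) (snd p) \<noteq> 0 then c else 1)"
proof -
  have "{(i, j). r i j \<noteq> 0} = {p \<in> RA_pos. r (fst p) (snd p) \<noteq> 0}"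
    using supported_outside[OF r] by fastforce
  hence "c ^ card {(i, j). r i j \<noteq> 0} = (\<Prod>p\<in>{p \<in> RA_pos. r (fst p) (snd p) \<noteq> 0}. c)" by simp
  also have "\<dots> = (\<Prod>p\<in>RA_pos. if r (fst p) (snd p) \<noteq> 0 then c else 1)"
    using prod.inter_filter[OF finite_pos_regions(2), of "\<lambda>_. c" "\<lambda>p. r (fst p) (snd p) \<noteq> 0"] by simp
  finally show ?thesis .
qed

lemma sum_supported_LA_pos:
  "(\<Sum>l\<in>(supported N LA_pos :: 'a::{finite,field} mat set). \<Prod>p\<in>LA_pos. factor_w p (l (fst p) (snd p))) =
     (if L_obstructed then 0 else of_nat (card (UNIV::'a set)) ^ card LA_pos)"
proof -
  have "(\<Sum>l\<in>(supported N LA_pos :: 'a mat set). \<Prod>p\<in>LA_pos. factor_w p (l (fst p) (snd p))) =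
        (\<Prod>p\<in>LA_pos. \<Sum>t\<in>(UNIV::'a set). factor_w p t)"
    by (rule sum_supported_prod[OF pos_regions_subset(1)])
  also have "\<dots> = (\<Prod>p\<in>LA_pos. if snd p - fst p = Suc (iota N w (fst p)) then 0
                                else of_nat (card (UNIV::'a set)))"
    by (simp only: factor_w_def sum_supchar_factor)
  also have "\<dots> = (if L_obstructed then 0 else of_nat (card (UNIV::'a set)) ^ card LA_pos)"
    unfolding L_obstructed_def using finite_pos_regions(1) by (rule prod_if_zero)
  finally show ?thesis .
qed

lemma sum_supported_RA_pos_weighted:
  "(\<Sum>r\<in>(supported N RA_pos :: 'a::{finite,field} mat set). \<Prod>p\<in>RA_pos.
      (if r (fst p) (snd p) \<noteq> 0 then - 1 / (of_nat (card (UNIV::'a set)) - 1) else 1) *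
      factor_w p (r (fst p) (snd p))) =
     (if R_obstructed then 0 else of_nat (card (UNIV::'a set)) ^ card RA_pos)"
proof -
  let ?wt = "\<lambda>t::'a. if t \<noteq> 0 then - 1 / (of_nat (card (UNIV::'a set)) - 1) else (1::complex)"
  have "(\<Sum>r\<in>(supported N RA_pos :: 'a mat set). \<Prod>p\<in>RA_pos. ?wt (r (fst p) (snd p)) * factor_w p (r (fst p) (snd p))) =
        (\<Prod>p\<in>RA_pos. \<Sum>t\<in>(UNIV::'a set). ?wt t * factor_w p t)"
    by (rule sum_supported_prod[OF pos_regions_subset(2), of "\<lambda>p t. ?wt t * factor_w p t"])
  also have "\<dots> = (\<Prod>p\<in>RA_pos. if snd p - fst p \<le> iota N w (fst p) then 0 else of_nat (card (UNIV::'a set)))"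
    by (simp only: factor_w_def sum_weighted_supchar_factor)
  also have "\<dots> = (if R_obstructed then 0 else of_nat (card (UNIV::'a set)) ^ card RA_pos)"
    unfolding R_obstructed_def using finite_pos_regions(2) by (rule prod_if_zero)
  finally show ?thesis .
qed

lemma Dela_supchar_eq_prod:
  fixes u' u :: "'a::{finite,field} mat"
  shows "Dela m n A (supchar N w) u' u = (if L_obstructed \<or> R_obstructed then 0 else
     (\<Prod>p\<in>Uvee_pos. factor_w p (emb_dual m n A u' (fst p) (snd p))) *
     (\<Prod>p\<in>UA_pos. factor_w p (emb_A m n A u (fst p) (snd p))))"
proof -
  let ?q = "of_nat (card (UNIV::'a set)) :: complex"
  have "?q \<noteq> 0" by simp
  let ?wt = "\<lambda>t::'a. if t \<noteq> 0 then - 1 / (?q - 1) else 1"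
  let ?K = "(\<Prod>p\<in>Uvee_pos. factor_w p (emb_dual m n A u' (fst p) (snd p))) *
            (\<Prod>p\<in>UA_pos. factor_w p (emb_A m n A u (fst p) (snd p)))"
  let ?L = "\<lambda>l. \<Prod>p\<in>LA_pos. factor_w p (l (fst p) (snd p))"
  let ?R = "\<lambda>r. \<Prod>p\<in>RA_pos. ?wt (r (fst p) (snd p)) * factor_w p (r (fst p) (snd p))"
  have "Dela m n A (supchar N w) u' u = 1 / ?q ^ (card LA_pos + card RA_pos) *
     (\<Sum>l\<in>(supported N LA_pos :: 'a mat set). \<Sum>r\<in>(supported N RA_pos :: 'a mat set). ?L l * ?R r * ?K)"
    unfolding Dela_def Let_def
  proof (intro arg_cong[where f = "(*) _"] sum.cong refl)
    fix l r assume l: "l \<in> (supported N LA_pos :: 'a mat set)" and r: "r \<in> (supported N RA_pos :: 'a mat set)"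
    show "(- 1 / (?q - 1)) ^ card {(i, j). r i j \<noteq> 0} *
        supchar N w (madd (madd (madd l (emb_dual m n A u')) (emb_A m n A u)) r) = ?L l * ?R r * ?K"
      unfolding pow_card_nonzero_eq_prod[OF r] supchar_region_prod[OF l r] prod.distrib
      by (simp add: algebra_simps)
  qed
  also have "(\<Sum>l\<in>(supported N LA_pos :: 'a mat set). \<Sum>r\<in>(supported N RA_pos :: 'a mat set). ?L l * ?R r * ?K) =
     (\<Sum>l\<in>(supported N LA_pos :: 'a mat set). \<Sum>r\<in>(supported N RA_pos :: 'a mat set). ?L l * ?R r) * ?K"
    by (simp only: sum_distrib_right)
  also have "\<dots> = (\<Sum>l\<in>(supported N LA_pos :: 'a mat set). ?L l) * (\<Sum>r\<in>(supported N RA_pos :: 'a mat set). ?R r) * ?K"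
    by (simp only: sum_product)
  also have "(\<Sum>l\<in>(supported N LA_pos :: 'a mat set). ?L l) * (\<Sum>r\<in>(supported N RA_pos :: 'a mat set). ?R r) =
     (if L_obstructed \<or> R_obstructed then 0 else ?q ^ (card LA_pos + card RA_pos))"
    unfolding sum_supported_LA_pos sum_supported_RA_pos_weighted by (simp add: power_add)
  finally show ?thesis using \<open>?q \<noteq> 0\<close> by simp
qed

lemma cA_le: "cA N A i \<le> N" unfolding cA_def by simp

lemma L_obstructed_iff: "L_obstructed \<longleftrightarrow> (\<exists>i\<in>A. iota N w i < compl_above N A i)"
proof
  assume L_obstructed
  then obtain p where p: "p \<in> LA_pos" "snd p - fst p = Suc (iota N w (fst p))" unfolding L_obstructed_def by blast
  obtain i j where ij: "p = (i, j)" by (cases p)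
  have i: "i \<in> A" "1 \<le> i" "i < j" "j \<le> N" "j \<le> cA N A i"
    using p(1) unfolding ij L_pos_def pos_def by auto
  have "cA N A i = i + compl_above N A i" using cA_eq_add_compl_above[OF A] i by simp
  thus "\<exists>i\<in>A. iota N w i < compl_above N A i" using i p(2) ij by (intro bexI[of _ i]) auto
next
  assume "\<exists>i\<in>A. iota N w i < compl_above N A i"
  then obtain i where i: "i \<in> A" "iota N w i < compl_above N A i" by blast
  have iN: "1 \<le> i" "i \<le> N" using i A by auto
  have c: "cA N A i = i + compl_above N A i" using cA_eq_add_compl_above[OF A iN(2)] .
  have "(i, i + Suc (iota N w i)) \<in> LA_pos"
    unfolding L_pos_def pos_def using i iN c cA_le[of i] by auto
  thus L_obstructed unfolding L_obstructed_def by force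
qed

lemma R_obstructed_iff: "R_obstructed \<longleftrightarrow> (\<exists>i\<in>{1..N} - A. compl_above N A i < iota N w i)"
proof
  assume R_obstructed
  then obtain p where p: "p \<in> RA_pos" "snd p - fst p \<le> iota N w (fst p)" unfolding R_obstructed_def by blast
  obtain i j where ij: "p = (i, j)" by (cases p)
  have i: "i \<notin> A" "1 \<le> i" "i < j" "j \<le> N" "cA N A i < j"
    using p(1) unfolding ij R_pos_def pos_def by auto
  have "cA N A i = i + compl_above N A i" using cA_eq_add_compl_above[OF A] i by simp
  thus "\<exists>i\<in>{1..N} - A. compl_above N A i < iota N w i" using i p(2) ij by (intro bexI[of _ i]) auto
next
  assume "\<exists>i\<in>{1..N} - A. compl_above N A i < iota N w i"
  then obtain i where i: "i \<in> {1..N} - A" "compl_above N A i < iota N w i" by blast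
  have c: "cA N A i = i + compl_above N A i" using cA_eq_add_compl_above[OF A] i by simp
  have "iota N w i \<le> N - i" by (rule iota_le[OF w])
  hence "(i, i + Suc (compl_above N A i)) \<in> RA_pos"
    unfolding R_pos_def pos_def using i c by auto
  thus R_obstructed unfolding R_obstructed_def using i by force
qed

lemma obstructed_iff_not_tail: "(L_obstructed \<or> R_obstructed) \<longleftrightarrow> \<not> tail_to_A"
proof
  assume "L_obstructed \<or> R_obstructed"
  thus "\<not> tail_to_A" unfolding L_obstructed_iff R_obstructed_iff using compl_above_le_iota iota_le_compl_above by force
next
  assume "\<not> tail_to_A"
  thus "L_obstructed \<or> R_obstructed" unfolding L_obstructed_iff R_obstructed_iff using tail_to_A_if_bounds by force
qed

lemma cA_compl:
  assumes i: "i \<in> {1..N} - A"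
  shows "cA N A i = m + card {a \<in> A. a < i}"
proof -
  have "A = {a \<in> A. a < i} \<union> {a \<in> A. i < a}" using i by (auto simp: not_less_iff_gr_or_eq)
  moreover have "card ({a \<in> A. a < i} \<union> {a \<in> A. i < a}) = card {a \<in> A. a < i} + card {a \<in> A. i < a}"
    using finite_subset[OF A] by (intro card_Un_disjoint) auto
  ultimately have "n = card {a \<in> A. a < i} + card {a \<in> A. i < a}" using card_A by simp
  thus ?thesis unfolding cA_def by simp
qed

lemma cA_in:
  assumes i: "i \<in> A"
  shows "cA N A i = m + rank_in A i"
proof -
  have "A = {a \<in> A. a \<le> i} \<union> {a \<in> A. i < a}" by auto
  moreover have "card ({a \<in> A. a \<le> i} \<union> {a \<in> A. i < a}) = card {a \<in> A. a \<le> i} + card {a \<in> A. i < a}"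
    using finite_subset[OF A] by (intro card_Un_disjoint) auto
  ultimately have "n = card {a \<in> A. a \<le> i} + card {a \<in> A. i < a}" using card_A by simp
  thus ?thesis unfolding cA_def using rank_in_eq_card[OF A i] by simp
qed

lemma card_A_below_le: "card {a \<in> A. a < i} \<le> i - 1"
proof -
  have "{a \<in> A. a < i} \<subseteq> {1..<i}" using A by auto
  hence "card {a \<in> A. a < i} \<le> card {1..<i}" by (intro card_mono) auto
  thus ?thesis by simp
qed

definition shift_Uvee :: "nat \<times> nat \<Rightarrow> nat \<times> nat" where "shift_Uvee p = (rank_compl A (fst p), snd p - card {a \<in> A. a < fst p})"
definition shift_UA :: "nat \<times> nat \<Rightarrow> nat \<times> nat" where "shift_UA p = (rank_in A (fst p), snd p - m)"

lemma Uvee_posD: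
  "(i, j) \<in> Uvee_pos \<Longrightarrow> i \<in> {1..N} - A \<and> i < j \<and> j \<le> m + card {a \<in> A. a < i}"
  using cA_compl[of i] unfolding Uvee_pos_def pos_def by auto

lemma inj_on_shift_Uvee: "inj_on shift_Uvee Uvee_pos"
proof (rule inj_onI)
  fix p p' assume p: "p \<in> Uvee_pos" and p': "p' \<in> Uvee_pos" and e: "shift_Uvee p = shift_Uvee p'"
  obtain i j i' j' where ij: "p = (i, j)" "p' = (i', j')" by (cases p, cases p')
  have d: "i \<in> {1..N} - A" "i < j" "i' \<in> {1..N} - A" "i' < j'" using Uvee_posD p p' ij by auto
  have "rank_compl A i = rank_compl A i'" using e ij unfolding shift_Uvee_def by simp
  hence ii: "i = i'" using bij_betw_rank_compl[OF A] d unfolding bij_betw_def inj_on_def by blast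
  have "j - card {a \<in> A. a < i} = j' - card {a \<in> A. a < i}" using e ij ii unfolding shift_Uvee_def by simp
  moreover have "card {a \<in> A. a < i} \<le> j" "card {a \<in> A. a < i} \<le> j'" using card_A_below_le[of i] d ii by auto
  ultimately have "j = j'" by simp
  thus "p = p'" using ij ii by simp
qed

lemma shift_Uvee_image: "shift_Uvee ` Uvee_pos = pos m"
proof
  have rank: "bij_betw (rank_compl A) ({1..N} - A) {1..m}" using bij_betw_rank_compl[OF A] card_A by simp
  show "shift_Uvee ` Uvee_pos \<subseteq> pos m"
  proof
    fix q assume "q \<in> shift_Uvee ` Uvee_pos"
    then obtain i j where ij: "(i, j) \<in> Uvee_pos" "q = shift_Uvee (i, j)" by auto
    have d: "i \<in> {1..N} - A" "i < j" "j \<le> m + card {a \<in> A. a < i}" using Uvee_posD ij by auto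
    have r: "rank_compl A i \<in> {1..m}" using rank d unfolding bij_betw_def by blast
    have k: "card {a \<in> A. a < i} \<le> i" using card_A_below_le[of i] by simp
    show "q \<in> pos m" unfolding ij shift_Uvee_def pos_def using r d k by (auto simp: rank_compl_def)
  qed
  show "pos m \<subseteq> shift_Uvee ` Uvee_pos"
  proof
    fix q assume q: "q \<in> pos m"
    obtain a b where ab: "q = (a, b)" by (cases q)
    have ab2: "1 \<le> a" "a < b" "b \<le> m" using q ab unfolding pos_def by auto
    hence "a \<in> rank_compl A ` ({1..N} - A)" using rank unfolding bij_betw_def by auto
    then obtain i where i: "i \<in> {1..N} - A" "rank_compl A i = a" by blast
    define k where "k = card {a \<in> A. a < i}"
    have k: "k \<le> i" using card_A_below_le[of i] unfolding k_def by simp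
    have ai: "a = i - k" using i unfolding rank_compl_def k_def by simp
    have "(i, b + k) \<in> Uvee_pos" unfolding Uvee_pos_def pos_def using i ab2 ai k cA_compl[OF i(1)] cA_le[of i]
      unfolding k_def by auto
    moreover have "shift_Uvee (i, b + k) = q" unfolding shift_Uvee_def ab using i k_def by simp
    ultimately show "q \<in> shift_Uvee ` Uvee_pos" by force
  qed
qed

lemma bij_betw_shift_Uvee: "bij_betw shift_Uvee Uvee_pos (pos m)"
  unfolding bij_betw_def using inj_on_shift_Uvee shift_Uvee_image by blast

lemma UA_posD: "(i, j) \<in> UA_pos \<Longrightarrow> i \<in> A \<and> m + rank_in A i < j \<and> j \<le> N"
  using cA_in[of i] unfolding UA_pos_def pos_def by auto

lemma inj_on_shift_UA: "inj_on shift_UA UA_pos"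
proof (rule inj_onI)
  fix p p' assume p: "p \<in> UA_pos" and p': "p' \<in> UA_pos" and e: "shift_UA p = shift_UA p'"
  obtain i j i' j' where ij: "p = (i, j)" "p' = (i', j')" by (cases p, cases p')
  have d: "i \<in> A" "m < j" "i' \<in> A" "m < j'" using UA_posD[of i j] UA_posD[of i' j'] p p' ij by auto
  have "rank_in A i = rank_in A i'" using e ij unfolding shift_UA_def by simp
  hence ii: "i = i'" using bij_betw_rank_in[OF A] d unfolding bij_betw_def inj_on_def by blast
  have "j - m = j' - m" using e ij unfolding shift_UA_def by simp
  hence "j = j'" using d by simp
  thus "p = p'" using ij ii by simp
qed

lemma shift_UA_image: "shift_UA ` UA_pos = pos n"
proof
  have rank: "bij_betw (rank_in A) A {1..n}" using bij_betw_rank_in[OF A] card_A by simp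
  show "shift_UA ` UA_pos \<subseteq> pos n"
  proof
    fix q assume "q \<in> shift_UA ` UA_pos"
    then obtain i j where ij: "(i, j) \<in> UA_pos" "q = shift_UA (i, j)" by auto
    have d: "i \<in> A" "m + rank_in A i < j" "j \<le> N" using UA_posD ij by auto
    have r: "rank_in A i \<in> {1..n}" using rank d unfolding bij_betw_def by blast
    show "q \<in> pos n" unfolding ij shift_UA_def pos_def using r d by auto
  qed
  show "pos n \<subseteq> shift_UA ` UA_pos"
  proof
    fix q assume q: "q \<in> pos n"
    obtain a b where ab: "q = (a, b)" by (cases q)
    have ab2: "1 \<le> a" "a < b" "b \<le> n" using q ab unfolding pos_def by auto
    hence "a \<in> rank_in A ` A" using rank unfolding bij_betw_def by auto
    then obtain i where i: "i \<in> A" "rank_in A i = a" by blast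
    have iN: "1 \<le> i" "i \<le> N" using i A by auto
    have "cA N A i = i + compl_above N A i" using cA_eq_add_compl_above[OF A iN(2)] .
    hence "i \<le> cA N A i" by simp
    hence "(i, b + m) \<in> UA_pos" unfolding UA_pos_def pos_def using i iN ab2 cA_in[OF i(1)] by auto
    moreover have "shift_UA (i, b + m) = q" unfolding shift_UA_def ab using i by simp
    ultimately show "q \<in> shift_UA ` UA_pos" by force
  qed
qed

lemma bij_betw_shift_UA: "bij_betw shift_UA UA_pos (pos n)"
  unfolding bij_betw_def using inj_on_shift_UA shift_UA_image by blast

lemma prod_Uvee_eq_supchar:
  fixes u' :: "('a::{finite,field}) mat"
  assumes H: tail_to_A and u': "u' \<in> ut m"
  shows "(\<Prod>p\<in>Uvee_pos. factor_w p (emb_dual m n A u' (fst p) (snd p))) = supchar m (std_le m n w) u'"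
proof -
  let ?F = "\<lambda>q. supchar_factor (snd q - fst q) (iota m (std_le m n w) (fst q)) (u' (fst q) (snd q))"
  have "supchar m (std_le m n w) u' = (\<Prod>q\<in>pos m. ?F q)"
    using supchar_eq_prod[OF std_le_permutes[OF H], of u'] u' by simp
  also have "\<dots> = (\<Prod>p\<in>Uvee_pos. ?F (shift_Uvee p))"
    by (rule prod.reindex_bij_betw[OF bij_betw_shift_Uvee, symmetric])
  also have "\<dots> = (\<Prod>p\<in>Uvee_pos. factor_w p (emb_dual m n A u' (fst p) (snd p)))"
  proof (rule prod.cong[OF refl])
    fix p assume p: "p \<in> Uvee_pos"
    obtain i j where ij: "p = (i, j)" by (cases p)
    have d: "i \<in> {1..N} - A" "i < j" "j \<le> cA N A i" "(i, j) \<in> pos N" using p ij unfolding Uvee_pos_def pos_def by auto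
    define k where "k = card {a \<in> A. a < i}"
    have k: "k \<le> i" using card_A_below_le[of i] unfolding k_def by simp
    have E: "emb_dual m n A u' i j = u' (i - k) (j - k)" unfolding emb_dual_def k_def using d by (simp add: Let_def)
    have \<iota>: "iota m (std_le m n w) (rank_compl A i) = iota N w i" by (rule iota_std_le[OF H d(1)])
    have "(j - k) - (i - k) = j - i" using k d by simp
    thus "?F (shift_Uvee p) = factor_w p (emb_dual m n A u' (fst p) (snd p))"
      unfolding shift_Uvee_def ij factor_w_def using E \<iota> by (simp add: rank_compl_def k_def)
  qed
  finally show ?thesis by simp
qed

lemma prod_UA_eq_supchar:
  fixes u :: "('a::{finite,field}) mat"
  assumes H: tail_to_A and u: "u \<in> ut n"
  shows "(\<Prod>p\<in>UA_pos. factor_w p (emb_A m n A u (fst p) (snd p))) = supchar n (std_gt m n w) u"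
proof -
  let ?F = "\<lambda>q. supchar_factor (snd q - fst q) (iota n (std_gt m n w) (fst q)) (u (fst q) (snd q))"
  have "supchar n (std_gt m n w) u = (\<Prod>q\<in>pos n. ?F q)"
    using supchar_eq_prod[OF std_gt_permutes[OF H], of u] u by simp
  also have "\<dots> = (\<Prod>p\<in>UA_pos. ?F (shift_UA p))"
    by (rule prod.reindex_bij_betw[OF bij_betw_shift_UA, symmetric])
  also have "\<dots> = (\<Prod>p\<in>UA_pos. factor_w p (emb_A m n A u (fst p) (snd p)))"
  proof (rule prod.cong[OF refl])
    fix p assume p: "p \<in> UA_pos"
    obtain i j where ij: "p = (i, j)" by (cases p)
    have d: "i \<in> A" "cA N A i < j" "(i, j) \<in> pos N" using p ij unfolding UA_pos_def by auto
    have iN: "i \<le> N" using d(1) A by auto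
    have E: "emb_A m n A u i j = u (rank_in A i) (j - m)" unfolding emb_A_def rank_in_def using d by simp
    have \<iota>: "iota N w i = compl_above N A i + iota n (std_gt m n w) (rank_in A i)" by (rule iota_eq_compl_above_add_iota_std_gt[OF H d(1)])
    have c1: "cA N A i = m + rank_in A i" by (rule cA_in[OF d(1)])
    have c2: "cA N A i = i + compl_above N A i" by (rule cA_eq_add_compl_above[OF A iN])
    have "j - i = (j - m - rank_in A i) + compl_above N A i" using c1 c2 d(2) by simp
    hence "factor_w p (emb_A m n A u (fst p) (snd p)) =
        supchar_factor ((j - m - rank_in A i) + compl_above N A i)
          (iota n (std_gt m n w) (rank_in A i) + compl_above N A i) (u (rank_in A i) (j - m))"
      unfolding factor_w_def ij using E \<iota> by (simp add: add.commute)
    thus "?F (shift_UA p) = factor_w p (emb_A m n A u (fst p) (snd p))"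
      unfolding shift_UA_def ij supchar_factor_shift by simp
  qed
  finally show ?thesis by simp
qed

end

theorem theorem4p5:
  fixes m n :: nat and A :: "nat set" and w :: "nat \<Rightarrow> nat"
    and u' u :: "('a::{finite,field}) mat"
  assumes "A \<subseteq> {1..m+n}" and "card A = n"
    and "w permutes {1..m+n}"
    and "u' \<in> ut m" and "u \<in> ut n"
  shows "Dela m n A (supchar (m + n) w) u' u =
           (if {i \<in> {1..m+n}. w i \<in> A} = {m+1..m+n}
            then supchar m (std_le m n w) u' * supchar n (std_gt m n w) u
            else 0)"
proof -
  interpret delapse_data m n A w using assms(1,2,3) by unfold_locales
  show ?thesis
  proof (cases tail_to_A)
    case True
    hence "\<not> (L_obstructed \<or> R_obstructed)" using obstructed_iff_not_tail by simp
    thus ?thesis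
      using True Dela_supchar_eq_prod[of u' u] prod_Uvee_eq_supchar[OF True assms(4)]
        prod_UA_eq_supchar[OF True assms(5)]
      unfolding tail_to_A_def by simp
  next
    case False
    hence "L_obstructed \<or> R_obstructed" using obstructed_iff_not_tail by simp
    thus ?thesis using False Dela_supchar_eq_prod[of u' u] unfolding tail_to_A_def by simp
  qed
qed

end
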